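(* Let $M\in\mathrm{M}_n(\mathbb{K})$ be a cyclic matrix with minimal polynomial $f=f_1^{m_1}\cdots f_s^{m_s}$, where $f_1,\dots,f_s\in\mathbb{K}[x]$ are pairwise distinct monic irreducible polynomials and $m_i\ge1$. Let $\mathcal{C}\subseteq\mathbb{L}^n$ be an $M$-cyclic code of dimension $k$ with generator polynomial $g=g_1\cdots g_s$, $g_i\mid f_i^{m_i}$ in $\mathbb{L}[x]$. Define $\ell_i=0$ if $g_i=1$ and $\ell_i=\min\{\ell\in\{1,\dots,m_i\}:g_i\mid f_i^{\ell}\}$ otherwise; and $\ell'_i=0$ if $g_i=f_i^{m_i}$ and $\ell'_i=\min\{\ell'\in\{1,\dots,m_i\}: f_i^{m_i-\ell'}\mid g_i\}$ otherwise. Then, if $k\ge1$, $$M_k(\mathcal{C})=\sum_{i=1}^s\ell'_i\deg f_i=\sum_{1\le i\le s,\ g_i\neq f_i^{m_i}}\ell'_i\deg f_i,$$ and, if $k\le n-1$, $$M_{n-k}(\mathcal{C}^\perp)=\sum_{i=1}^s\ell_i\deg f_i=\sum_{1\le i\le s,\ \gcd(g,f_i)\neq1}\ell_i\deg f_i.$$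
   Context: Let $\mathbb{L}/\mathbb{K}$ be a field extension of finite degree $m\ge n$. Vectors are row vectors; $\mathcal{C}^\perp=\{c'\in\mathbb{L}^n:\sum_jc'_jc_j=0\ \forall c\in\mathcal{C}\}$. For $c=(c_1,\dots,c_n)\in\mathbb{L}^n$, $\mathrm{Rsupp}(c)\subseteq\mathbb{K}^n$ is the $\mathbb{K}$-row space of the $m\times n$ matrix over $\mathbb{K}$ whose $j$-th column is the coordinate vector of $c_j$ in a fixed $\mathbb{K}$-basis of $\mathbb{L}$; for an $\mathbb{L}$-subspace $\mathcal{D}$, $\mathrm{wt}_R(\mathcal{D})$ is the $\mathbb{K}$-dimension of the span of all $\mathrm{Rsupp}(d)$, $d\in\mathcal{D}$. For a $k$-dimensional $\mathbb{L}$-subspace $\mathcal{C}$ and $1\le r\le k$, $M_r(\mathcal{C})=\min\{\mathrm{wt}_R(\mathcal{D}):\mathcal{D}\subseteq\mathcal{C},\dim_{\mathbb{L}}\mathcal{D}=r\}$. A matrix $M\in\mathrm{M}_n(\mathbb{K})$ is cyclic if there is $v\in\mathbb{K}^n$ (a cyclic vector) with $(v,vM^t,\dots,v(M^t)^{n-1})$ a basis; equivalently its minimal polynomial $f$ has degree $n$. An $M$-cyclic code is an $\mathbb{L}$-subspace $\mathcal{C}\subseteq\mathbb{L}^n$ with $cM^t\in\mathcal{C}$ for all $c\in\mathcal{C}$; each equals $\mathcal{C}_g=\{v\,g(M)^tP(M)^t:P\in\mathbb{L}[x]\}$ for a unique monic divisor $g$ of $f$ in $\mathbb{L}[x]$ (its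 generator polynomial), and $\dim\mathcal{C}_g=n-\deg g$. *)

theory Defs
  imports "HOL-Analysis.Analysis" "HOL-Computational_Algebra.Polynomial"
    "HOL-Computational_Algebra.Polynomial_Factorial" "HOL-Computational_Algebra.Euclidean_Algorithm"
begin

text \<open>The field K is a type 'k, the field L is a type 'l, and the extension
  L/K is given by a field embedding emb of K into L.\<close>

definition field_emb :: "('k::field \<Rightarrow> 'l::field) \<Rightarrow> bool" where
  "field_emb emb \<longleftrightarrow> emb 1 = 1 \<and> (\<forall>a b. emb (a + b) = emb a + emb b)
     \<and> (\<forall>a b. emb (a * b) = emb a * emb b)"

definition is_K_basis :: "('k::field \<Rightarrow> 'l::field) \<Rightarrow> (nat \<Rightarrow> 'l) \<Rightarrow> nat \<Rightarrow> bool" where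
  "is_K_basis emb b m \<longleftrightarrow>
     (\<forall>x. \<exists>!a. (\<forall>t\<ge>m. a t = 0) \<and> x = (\<Sum>t<m. emb (a t) * b t))"

definition coords :: "('k::field \<Rightarrow> 'l::field) \<Rightarrow> (nat \<Rightarrow> 'l) \<Rightarrow> nat \<Rightarrow> 'l \<Rightarrow> nat \<Rightarrow> 'k" where
  "coords emb b m x = (THE a. (\<forall>t\<ge>m. a t = 0) \<and> x = (\<Sum>t<m. emb (a t) * b t))"

text \<open>Rsupp(c): the K-row space of the m x n matrix whose j-th column is the
  coordinate vector of c_j.\<close>
definition Rsupp :: "('k::field \<Rightarrow> 'l::field) \<Rightarrow> (nat \<Rightarrow> 'l) \<Rightarrow> nat \<Rightarrow> 'l^'n \<Rightarrow> ('k^'n) set" where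
  "Rsupp emb b m c = vec.span {(\<chi> j. coords emb b m (c $ j) t) | t. t < m}"

definition wtR :: "('k::field \<Rightarrow> 'l::field) \<Rightarrow> (nat \<Rightarrow> 'l) \<Rightarrow> nat \<Rightarrow> ('l^'n) set \<Rightarrow> nat" where
  "wtR emb b m D = vec.dim (vec.span (\<Union>d\<in>D. Rsupp emb b m d))"

definition Mr :: "('k::field \<Rightarrow> 'l::field) \<Rightarrow> (nat \<Rightarrow> 'l) \<Rightarrow> nat \<Rightarrow> nat \<Rightarrow> ('l^'n) set \<Rightarrow> nat" where
  "Mr emb b m r C = (INF D \<in> {D. vec.subspace D \<and> D \<subseteq> C \<and> vec.dim D = r}. wtR emb b m D)"

definition dual_code :: "('l::field^'n) set \<Rightarrow> ('l^'n) set" where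
  "dual_code C = {c'. \<forall>c\<in>C. (\<Sum>j\<in>UNIV. c' $ j * c $ j) = 0}"

definition matpow :: "'a::comm_ring_1^'n^'n \<Rightarrow> nat \<Rightarrow> 'a^'n^'n" where
  "matpow A i = (((**) A) ^^ i) (mat 1)"

definition poly_mat :: "'a::comm_ring_1 poly \<Rightarrow> 'a^'n^'n \<Rightarrow> 'a^'n^'n" where
  "poly_mat p A = (\<Sum>i\<le>degree p. (\<chi> r s. coeff p i * matpow A i $ r $ s))"

definition map_mat :: "('k \<Rightarrow> 'l) \<Rightarrow> 'k^'n^'n \<Rightarrow> 'l^'n^'n" where
  "map_mat h A = (\<chi> r s. h (A $ r $ s))"

definition map_vec :: "('k \<Rightarrow> 'l) \<Rightarrow> 'k^'n \<Rightarrow> 'l^'n" where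
  "map_vec h v = (\<chi> j. h (v $ j))"

text \<open>Row vector v times (M^t)^i is the column vector M^i v.  v is a cyclic
  vector iff (v, vM^t, ..., v(M^t)^(n-1)) is a basis of K^n.\<close>
definition cyclic_vector :: "'k::field^'n^'n \<Rightarrow> 'k^'n \<Rightarrow> bool" where
  "cyclic_vector M v \<longleftrightarrow>
     inj_on (\<lambda>i. matpow M i *v v) {..<CARD('n)}
     \<and> vec.independent ((\<lambda>i. matpow M i *v v) ` {..<CARD('n)})
     \<and> vec.span ((\<lambda>i. matpow M i *v v) ` {..<CARD('n)}) = UNIV"

definition cyclic_matrix :: "'k::field^'n^'n \<Rightarrow> bool" where
  "cyclic_matrix M \<longleftrightarrow> (\<exists>v. cyclic_vector M v)"

definition is_min_poly :: "'k::field^'n^'n \<Rightarrow> 'k poly \<Rightarrow> bool" where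
  "is_min_poly M f \<longleftrightarrow> lead_coeff f = 1 \<and> poly_mat f M = 0 \<and>
     (\<forall>p. p \<noteq> 0 \<and> poly_mat p M = 0 \<longrightarrow> degree f \<le> degree p)"

definition M_cyclic_code :: "('k::field \<Rightarrow> 'l::field) \<Rightarrow> 'k^'n^'n \<Rightarrow> ('l^'n) set \<Rightarrow> bool" where
  "M_cyclic_code emb M C \<longleftrightarrow> vec.subspace C \<and> (\<forall>c\<in>C. map_mat emb M *v c \<in> C)"

definition code_of_gen :: "('k::field \<Rightarrow> 'l::field) \<Rightarrow> 'k^'n^'n \<Rightarrow> 'k^'n \<Rightarrow> 'l poly \<Rightarrow> ('l^'n) set" where
  "code_of_gen emb M v g =
     {poly_mat P (map_mat emb M) *v (poly_mat g (map_mat emb M) *v map_vec emb v) | P. True}"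

end

theory Submission
  imports Defs
begin

text \<open>The \<open>K\<close>-span \<open>S(D)\<close> of the rank supports of an \<open>L\<close>-subspace \<open>D\<close> is the least
  \<open>K\<close>-subspace \<open>V\<close> with \<open>D \<subseteq> L \<otimes> V\<close>, and \<open>wt\<^sub>R(D) = dim S(D)\<close>; since there is only one
  subspace of \<open>C\<close> of dimension \<open>k\<close>, \<open>M\<^sub>k(C) = wt\<^sub>R(C)\<close>, and likewise for \<open>C\<^sup>\<perp>\<close>.
  If \<open>D\<close> is \<open>M\<close>-invariant then so is \<open>S(D)\<close>, and as \<open>M\<close> is cyclic with minimal polynomial
  \<open>f\<close>, every \<open>M\<close>-invariant \<open>K\<close>-subspace is a code \<open>C\<^sub>h = {q(M) v : h \<bar> q}\<close> with
  \<open>h \<bar> f\<close>, of dimension \<open>n - deg h\<close>. For \<open>D = C\<^sub>g\<close> this forces \<open>h\<close> to be the largest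
  divisor of \<open>f\<close> over \<open>K\<close> that divides \<open>g\<close>, namely \<open>\<Prod> f\<^sub>i\<^bsup>m\<^sub>i - \<ell>'\<^sub>i\<^esup>\<close>, whence
  \<open>wt\<^sub>R(C) = \<Sum> \<ell>'\<^sub>i deg f\<^sub>i\<close>. Dually, \<open>S(C\<^sup>\<perp>)\<close> is the orthogonal of the \<open>K\<close>-rational part
  \<open>C \<inter> K\<^sup>n\<close>, which is \<open>C\<^sub>H\<close> for the least divisor \<open>H = \<Prod> f\<^sub>i\<^bsup>\<ell>\<^sub>i\<^esup>\<close> of \<open>f\<close> over \<open>K\<close>
  that \<open>g\<close> divides, so \<open>wt\<^sub>R(C\<^sup>\<perp>) = deg H\<close>.\<close>

section \<open>Rank, null space and dual codes\<close>

lemma span_inter_span_disjoint: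
  fixes K R :: "('a::field^'n) set"
  assumes "vec.independent (K \<union> R)" and "K \<inter> R = {}"
  shows "vec.span K \<inter> vec.span R = {0}"
proof -
  have indep: "vec.independent K" "vec.independent R"
    using assms(1) vec.independent_mono by blast+
  have "finite (K \<union> R)"
    using assms(1) vec.finiteI_independent by blast
  then have "card (K \<union> R) = card K + card R"
    using assms(2) by (simp add: card_Un_disjoint)
  moreover have "{x + y |x y. x \<in> vec.span K \<and> y \<in> vec.span R} = vec.span (K \<union> R)"
    by (simp add: vec.span_Un)
  ultimately have "vec.dim (vec.span K \<inter> vec.span R) = 0"
    using vec.dim_sums_Int[of "vec.span K" "vec.span R"] assms(1) indep
    by (simp add: vec.dim_eq_card_independent)
  then show ?thesis
    using vec.span_zero by auto
qed

lemma dim_null_space_add_dim_range: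
  fixes Q :: "'a::field^'n^'m"
  shows "vec.dim {x. Q *v x = 0} + vec.dim (range ((*v) Q)) = CARD('n)"
proof -
  let ?N = "{x. Q *v x = 0}"
  obtain K where K: "K \<subseteq> ?N" "vec.independent K" "?N \<subseteq> vec.span K" "card K = vec.dim ?N"
    using vec.basis_exists[of ?N] by blast
  obtain B where B: "K \<subseteq> B" "vec.independent B" "UNIV \<subseteq> vec.span B"
    by (rule vec.maximal_independent_subset_extend[of K UNIV, OF _ K(2)]) auto
  define R where "R = B - K"
  have "card K + card R = CARD('n)"
  proof -
    have "finite B" "card B = CARD('n)"
      using vec.basis_card_eq_dim[of B UNIV] B vec.finiteI_independent[OF B(2)]
      by (simp_all add: vec_dim_card card_cart_basis)
    then show ?thesis
      using B(1) card_mono[of B K] by (simp add: R_def card_Diff_subset finite_subset)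
  qed
  moreover have "vec.span K \<inter> vec.span R = {0}"
    using B(1,2) by (intro span_inter_span_disjoint) (auto simp: R_def Un_absorb1)
  then have "inj_on ((*v) Q) (vec.span R)"
    using K(3) by (subst vec.inj_on_iff_eq_0) auto
  then have "vec.dim ((*v) Q ` R) = card R"
    using vec.dim_image_eq[of "(*v) Q" R] B(2) R_def
    by (simp add: vec.dim_eq_card_independent vec.independent_mono)
  moreover have "vec.span ((*v) Q ` R) = range ((*v) Q)"
  proof -
    have "(*v) Q ` B \<subseteq> insert 0 ((*v) Q ` R)"
      using K(1) R_def by auto
    then have "vec.span ((*v) Q ` B) \<subseteq> vec.span ((*v) Q ` R)"
      by (metis vec.span_insert_0 vec.span_mono)
    moreover have "vec.span ((*v) Q ` R) \<subseteq> vec.span ((*v) Q ` B)"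
      using R_def by (intro vec.span_mono) auto
    ultimately show ?thesis
      using B(3) top_le[of "vec.span B"] by (simp add: vec.span_image)
  qed
  ultimately show ?thesis
    using K(4) vec.dim_span[of "(*v) Q ` R"] by simp
qed

lemma dim_range_le_rank:
  fixes Q :: "'a::field^'n^'m"
  shows "vec.dim (range ((*v) Q)) \<le> rank Q"
proof -
  obtain R where R: "R \<subseteq> rows Q" "vec.independent R" "rows Q \<subseteq> vec.span R"
    "card R = vec.dim (rows Q)"
    using vec.basis_exists[of "rows Q"] by blast
  have finR: "finite R" using R(2) vec.finiteI_independent by blast
  have "\<forall>i. \<exists>u. Q $ i = (\<Sum>r\<in>R. u r *s r)"
    using R(3) unfolding rows_def row_def vec.span_finite[OF finR] by (auto simp: vec_nth_inverse)
  then obtain u where u: "\<And>i. Q $ i = (\<Sum>r\<in>R. u i r *s r)" by metis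
  define col where "col r = (\<chi> i. u i r)" for r
  have "range ((*v) Q) \<subseteq> vec.span (col ` R)"
  proof
    fix y assume "y \<in> range ((*v) Q)"
    then obtain x where y: "y = Q *v x" by blast
    have "y = (\<Sum>r\<in>R. (\<Sum>j\<in>UNIV. r $ j * x $ j) *s col r)"
      by (simp add: vec_eq_iff y matrix_vector_mult_def u sum_component col_def
          sum_distrib_right sum_distrib_left mult_ac sum.swap[of _ UNIV R])
    then show "y \<in> vec.span (col ` R)"
      by (simp only:) (intro vec.span_sum vec.span_scale vec.span_base imageI)
  qed
  then have "vec.dim (range ((*v) Q)) \<le> card (col ` R)"
    using finR by (intro vec.dim_le_card) auto
  also have "\<dots> \<le> card R" using finR card_image_le by blast
  finally show ?thesis using R(4) by (simp add: row_rank_def_gen)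
qed

lemma range_transpose_eq_span_rows:
  fixes Q :: "'a::field^'n^'m"
  shows "range ((*v) (transpose Q)) = vec.span (rows Q)"
proof
  show "range ((*v) (transpose Q)) \<subseteq> vec.span (rows Q)"
  proof
    fix y assume "y \<in> range ((*v) (transpose Q))"
    then obtain x where y: "y = transpose Q *v x" by blast
    have "y = (\<Sum>i\<in>UNIV. x $ i *s row i Q)"
      by (simp add: y vec_eq_iff matrix_vector_mult_def transpose_def row_def sum_component mult_ac)
    then show "y \<in> vec.span (rows Q)"
      by (simp only:) (intro vec.span_sum vec.span_scale vec.span_base, auto simp: rows_def)
  qed
next
  have "row i Q = transpose Q *v axis i 1" for i
    by (simp add: vec_eq_iff matrix_vector_mult_def transpose_def row_def axis_def
        if_distrib cong: if_cong)
  then have "rows Q \<subseteq> range ((*v) (transpose Q))"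
    by (auto simp: rows_def)
  then show "vec.span (rows Q) \<subseteq> range ((*v) (transpose Q))"
    by (rule vec.span_minimal) (rule vec.subspace_image[OF vec.subspace_UNIV])
qed

lemma rank_eq_dim_range:
  fixes Q :: "'a::field^'n^'m"
  shows "rank Q = vec.dim (range ((*v) Q))"
proof -
  have "columns Q \<subseteq> range ((*v) Q)"
    by (auto simp: columns_def column_def vec_eq_iff matrix_vector_mult_def axis_def
        if_distrib cong: if_cong intro!: image_eqI[where x = "axis _ 1"])
  have "rank Q = vec.dim (vec.span (rows Q))"
    by (simp add: row_rank_def_gen)
  also have "\<dots> = vec.dim (range ((*v) (transpose Q)))"
    by (simp only: range_transpose_eq_span_rows)
  also have "\<dots> \<le> vec.dim (columns Q)"
    using dim_range_le_rank[of "transpose Q"] by (simp add: row_rank_def_gen)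
  also have "\<dots> \<le> vec.dim (range ((*v) Q))"
    by (rule vec.dim_subset) fact
  finally show ?thesis using dim_range_le_rank[of Q] by linarith
qed

lemma subspace_dual_code: "vec.subspace (dual_code V)"
  unfolding vec.subspace_def dual_code_def
  by (auto simp: sum.distrib algebra_simps sum_distrib_left[symmetric])

lemma dual_code_span_rows:
  fixes Q :: "'a::field^'n^'m"
  shows "dual_code (vec.span (rows Q)) = {x. Q *v x = 0}"
proof -
  have row_orth: "(Q *v x) $ i = (\<Sum>j\<in>UNIV. x $ j * row i Q $ j)" for x i
    by (simp add: matrix_vector_mult_def row_def mult_ac)
  have "x \<in> dual_code (vec.span (rows Q)) \<longleftrightarrow> x \<in> dual_code (rows Q)" for x
  proof
    assume "x \<in> dual_code (rows Q)"
    then have "rows Q \<subseteq> dual_code {x}"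
      by (auto simp: dual_code_def mult.commute)
    then have "vec.span (rows Q) \<subseteq> dual_code {x}"
      by (rule vec.span_minimal[OF _ subspace_dual_code])
    then show "x \<in> dual_code (vec.span (rows Q))"
      by (auto simp: dual_code_def mult.commute)
  qed (auto simp: dual_code_def intro: vec.span_base)
  then show ?thesis
    by (auto simp: dual_code_def rows_def vec_eq_iff row_orth)
qed

lemma ex_span_rows_eq:
  fixes V :: "('a::field^'n) set"
  assumes "vec.subspace V"
  obtains Q :: "'a^'n^'n" where "vec.span (rows Q) = V"
proof -
  obtain B where B: "B \<subseteq> V" "vec.independent B" "V \<subseteq> vec.span B" "card B = vec.dim V"
    using vec.basis_exists[of V] by blast
  have "finite B" using B(2) vec.finiteI_independent by blast
  moreover have "card B \<le> CARD('n)"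
    using B(4) dim_subset_UNIV_cart_gen[of V] by simp
  ultimately obtain \<iota> :: "'a^'n \<Rightarrow> 'n" where \<iota>: "inj_on \<iota> B"
    using card_le_inj[of B "UNIV :: 'n set"] by auto
  define Q :: "'a^'n^'n" where "Q = (\<chi> i. if i \<in> \<iota> ` B then inv_into B \<iota> i else 0)"
  have "rows Q \<subseteq> insert 0 B"
    by (auto simp: rows_def row_def Q_def inv_into_into vec_nth_inverse)
  moreover have "B \<subseteq> rows Q"
  proof
    fix b assume "b \<in> B"
    then have "row (\<iota> b) Q = b" using \<iota> by (simp add: row_def Q_def vec_nth_inverse)
    then show "b \<in> rows Q"
      unfolding rows_def by (metis (mono_tags, lifting) UNIV_I mem_Collect_eq)
  qed
  ultimately have "vec.span (rows Q) = vec.span B"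
    by (metis vec.span_insert_0 vec.span_mono subset_antisym)
  also have "\<dots> = V" using B assms vec.span_subspace by blast
  finally show ?thesis by (rule that)
qed

lemma dim_dual_code:
  fixes V :: "('a::field^'n) set"
  assumes "vec.subspace V"
  shows "vec.dim (dual_code V) = CARD('n) - vec.dim V"
proof -
  obtain Q :: "'a^'n^'n" where Q: "vec.span (rows Q) = V"
    using ex_span_rows_eq[OF assms] by blast
  have "rank Q = vec.dim V"
    using Q vec.dim_span[of "rows Q"] by (simp add: row_rank_def_gen)
  then show ?thesis
    using dim_null_space_add_dim_range[of Q] dual_code_span_rows[of Q] Q
    by (simp add: rank_eq_dim_range)
qed

lemma dual_code_dual_code:
  fixes V :: "('a::field^'n) set"
  assumes "vec.subspace V"
  shows "dual_code (dual_code V) = V"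
proof -
  have "V \<subseteq> dual_code (dual_code V)"
    by (auto simp: dual_code_def mult.commute)
  moreover have "vec.dim (dual_code (dual_code V)) = vec.dim V"
    using dim_dual_code[OF assms] dim_dual_code[OF subspace_dual_code, of V]
      dim_subset_UNIV_cart_gen[of V] by simp
  ultimately show ?thesis
    using vec.subspace_dim_equal[OF assms subspace_dual_code] by (metis order_refl)
qed

section \<open>Polynomials evaluated at a matrix\<close>

lemma matpow_0 [simp]: "matpow A 0 = mat 1"
  by (simp add: matpow_def)

lemma matpow_Suc: "matpow A (Suc i) = A ** matpow A i"
  by (simp add: matpow_def)

lemma matrix_vector_mult_sum: "(A::'a::field^'n^'m) *v sum f S = (\<Sum>i\<in>S. A *v f i)"
  by (induction S rule: infinite_finite_induct) (auto simp: matrix_vector_right_distrib)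

context
  fixes A :: "'a::field^'n^'n"
begin

lemma poly_mat_vec_eq_sum:
  assumes "degree p \<le> N"
  shows "poly_mat p A *v x = (\<Sum>i\<le>N. coeff p i *s (matpow A i *v x))"
proof -
  have "poly_mat p A *v x = (\<Sum>i\<le>degree p. coeff p i *s (matpow A i *v x))"
    by (simp add: poly_mat_def vec_eq_iff matrix_vector_mult_def sum_component
        sum_distrib_left sum.swap[of _ UNIV] mult_ac)
  also have "\<dots> = (\<Sum>i\<le>N. coeff p i *s (matpow A i *v x))"
    by (rule sum.mono_neutral_left) (use assms in \<open>auto simp: coeff_eq_0\<close>)
  finally show ?thesis .
qed

lemma poly_mat_vec_0 [simp]: "poly_mat 0 A *v x = 0"
  by (simp add: poly_mat_vec_eq_sum[of 0 0])

lemma poly_mat_vec_pCons: "poly_mat (pCons a p) A *v x = a *s x + A *v (poly_mat p A *v x)"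
proof -
  have "poly_mat (pCons a p) A *v x =
      (\<Sum>i\<le>Suc (degree p). coeff (pCons a p) i *s (matpow A i *v x))"
    by (rule poly_mat_vec_eq_sum) (simp add: degree_pCons_le)
  also have "\<dots> = a *s x + (\<Sum>i\<le>degree p. coeff p i *s (matpow A (Suc i) *v x))"
    by (subst sum.atMost_Suc_shift) simp
  also have "(\<Sum>i\<le>degree p. coeff p i *s (matpow A (Suc i) *v x)) = A *v (poly_mat p A *v x)"
    by (simp add: poly_mat_vec_eq_sum[of p "degree p"] matrix_vector_mult_sum
        vector_scalar_commute matpow_Suc matrix_vector_mul_assoc)
  finally show ?thesis .
qed

lemma poly_mat_vec_add: "poly_mat (p + q) A *v x = poly_mat p A *v x + poly_mat q A *v x"
proof -
  let ?N = "max (degree p) (degree q)"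
  have "poly_mat (p + q) A *v x = (\<Sum>i\<le>?N. coeff (p + q) i *s (matpow A i *v x))"
    by (rule poly_mat_vec_eq_sum) (simp add: degree_add_le)
  then show ?thesis
    by (simp add: poly_mat_vec_eq_sum[of p ?N] poly_mat_vec_eq_sum[of q ?N] sum.distrib
        vector_sadd_rdistrib)
qed

lemma poly_mat_vec_smult: "poly_mat (smult c p) A *v x = c *s (poly_mat p A *v x)"
proof -
  have "poly_mat (smult c p) A *v x =
      (\<Sum>i\<le>degree p. coeff (smult c p) i *s (matpow A i *v x))"
    by (rule poly_mat_vec_eq_sum) (simp add: degree_smult_le)
  then show ?thesis
    by (simp add: poly_mat_vec_eq_sum[of p "degree p"] vec.scale_sum_right)
qed

lemma poly_mat_vec_diff: "poly_mat (p - q) A *v x = poly_mat p A *v x - poly_mat q A *v x"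
  using poly_mat_vec_add[of p "- q" x] poly_mat_vec_smult[of "- 1" q x] by simp

lemma poly_mat_vec_sum: "poly_mat (sum p S) A *v x = (\<Sum>i\<in>S. poly_mat (p i) A *v x)"
  by (induction S rule: infinite_finite_induct) (auto simp: poly_mat_vec_add)

lemma poly_mat_vec_mult: "poly_mat (p * q) A *v x = poly_mat p A *v (poly_mat q A *v x)"
proof (induction p rule: pCons_induct)
  case (pCons a p)
  have "poly_mat (pCons a p * q) A *v x = poly_mat (smult a q + pCons 0 (p * q)) A *v x"
    by simp
  also have "\<dots> = poly_mat (pCons a p) A *v (poly_mat q A *v x)"
    by (simp only: poly_mat_vec_add poly_mat_vec_smult poly_mat_vec_pCons pCons.IH) simp
  finally show ?case .
qed simp

lemma poly_mat_vec_commute: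
  "poly_mat p A *v (poly_mat q A *v x) = poly_mat q A *v (poly_mat p A *v x)"
  by (metis poly_mat_vec_mult mult.commute)

lemma poly_mat_vec_monom: "poly_mat (monom c i) A *v x = c *s (matpow A i *v x)"
proof -
  have "poly_mat (monom c i) A *v x = (\<Sum>j\<le>i. coeff (monom c i) j *s (matpow A j *v x))"
    by (rule poly_mat_vec_eq_sum) (simp add: degree_monom_le)
  also have "\<dots> = c *s (matpow A i *v x)"
    by (subst sum.remove[of _ i]) (auto simp: coeff_monom)
  finally show ?thesis .
qed

lemma poly_mat_vec_in_span:
  assumes "degree p < N"
  shows "poly_mat p A *v x \<in> vec.span ((\<lambda>i. matpow A i *v x) ` {..<N})"
  unfolding poly_mat_vec_eq_sum[OF order.refl]
  using assms by (intro vec.span_sum vec.span_scale vec.span_base) auto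

lemma poly_mat_vec_in_invariant_subspace:
  assumes "vec.subspace S" and "\<forall>y\<in>S. A *v y \<in> S" and "x \<in> S"
  shows "poly_mat p A *v x \<in> S"
  by (induction p rule: pCons_induct)
    (use assms in \<open>simp_all add: poly_mat_vec_pCons vec.subspace_0 vec.subspace_add vec.subspace_scale\<close>)

end

section \<open>Polynomials over a field\<close>

lemma poly_ideal_principal:
  fixes J :: "'a::field poly set"
  assumes "p \<in> J" "p \<noteq> 0"
    and diff: "\<And>x y. x \<in> J \<Longrightarrow> y \<in> J \<Longrightarrow> x - y \<in> J"
    and mult: "\<And>r x. x \<in> J \<Longrightarrow> r * x \<in> J"
  obtains d where "d \<in> J" "d \<noteq> 0" "\<And>x. x \<in> J \<Longrightarrow> d dvd x"
proof -
  obtain d where d: "d \<in> J" "d \<noteq> 0"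
    and least: "\<And>q. q \<in> J \<Longrightarrow> q \<noteq> 0 \<Longrightarrow> degree d \<le> degree q"
    using ex_has_least_nat[of "\<lambda>q. q \<in> J \<and> q \<noteq> 0" p degree] assms(1,2) by blast
  have "d dvd x" if "x \<in> J" for x
  proof -
    have "x mod d \<in> J"
      using diff[OF that mult[OF d(1), of "x div d"]] by (simp add: minus_div_mult_eq_mod)
    then have "x mod d = 0"
      using least[of "x mod d"] degree_mod_less'[OF d(2), of x] by linarith
    then show ?thesis by (simp add: mod_eq_0_iff_dvd)
  qed
  with d show ?thesis by (rule that)
qed

lemma irreducible_poly_bezout:
  fixes p a :: "'a::field poly"
  assumes irr: "irreducible p" and "\<not> p dvd a"
  obtains u v where "u * p + v * a = 1"
proof -
  define J where "J = {u * p + v * a | u v. True}"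
  have "p = 1 * p + 0 * a" "a = 0 * p + 1 * a"
    by simp_all
  then have "p \<in> J" "a \<in> J"
    unfolding J_def by blast+
  have diff: "x - y \<in> J" if xy: "x \<in> J" "y \<in> J" for x y
  proof -
    obtain u v u' v' where "x = u * p + v * a" "y = u' * p + v' * a"
      using xy unfolding J_def by blast
    then have "x - y = (u - u') * p + (v - v') * a" by (simp add: algebra_simps)
    then show ?thesis by (auto simp: J_def)
  qed
  have mult: "r * x \<in> J" if x: "x \<in> J" for r x
  proof -
    obtain u v where "x = u * p + v * a" using x unfolding J_def by blast
    then have "r * x = (r * u) * p + (r * v) * a" by (simp add: algebra_simps)
    then show ?thesis by (auto simp: J_def)
  qed
  have "p \<noteq> 0" using irr by auto
  obtain d where d: "d \<in> J" "d \<noteq> 0" "\<And>x. x \<in> J \<Longrightarrow> d dvd x"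
    using poly_ideal_principal[OF \<open>p \<in> J\<close> \<open>p \<noteq> 0\<close> diff mult] by metis
  have "\<not> p dvd d"
    using d(3)[OF \<open>a \<in> J\<close>] \<open>\<not> p dvd a\<close> dvd_trans by blast
  then have "is_unit d"
    using irreducibleD'[OF irr d(3)[OF \<open>p \<in> J\<close>]] by blast
  then obtain k where k: "1 = d * k" by (rule dvdE)
  obtain u v where "d = u * p + v * a" using d(1) by (auto simp: J_def)
  with k have "(k * u) * p + (k * v) * a = 1" by (simp add: algebra_simps)
  then show ?thesis by (rule that)
qed

lemma irreducible_imp_prime_elem_poly:
  fixes p :: "'a::field poly"
  assumes irr: "irreducible p"
  shows "prime_elem p"
proof (rule prime_elemI)
  show "p \<noteq> 0" "\<not> p dvd 1" using irr by (auto simp: irreducible_def)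
next
  fix a b assume ab: "p dvd a * b"
  show "p dvd a \<or> p dvd b"
  proof (cases "p dvd a")
    case False
    then obtain u v where uv: "u * p + v * a = 1"
      by (rule irreducible_poly_bezout[OF irr])
    have "b = (u * p + v * a) * b"
      by (simp add: uv)
    also have "\<dots> = (u * b) * p + v * (a * b)"
      by (simp add: algebra_simps)
    finally have "b = (u * b) * p + v * (a * b)" .
    moreover have "p dvd (u * b) * p + v * (a * b)"
      using ab by (intro dvd_add) simp_all
    ultimately show ?thesis by simp
  qed simp
qed

lemma irreducible_divisor_exists:
  fixes e :: "'a::field poly"
  assumes "e \<noteq> 0" "\<not> is_unit e"
  obtains p where "irreducible p" "p dvd e"
  using assms
proof (induction "degree e" arbitrary: e thesis rule: less_induct)
  case less
  show ?case
  proof (cases "irreducible e")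
    case False
    then obtain a c where ac: "e = a * c" "\<not> is_unit a" "\<not> is_unit c"
      using less.prems(2,3) by (auto simp: irreducible_def)
    then have "a \<noteq> 0" "c \<noteq> 0" using less.prems(2) by auto
    then have "degree a < degree e"
      using ac is_unit_iff_degree[of c] by (simp add: degree_mult_eq)
    then obtain p where "irreducible p" "p dvd a"
      using less.hyps[of a] ac(2) \<open>a \<noteq> 0\<close> by blast
    then show ?thesis using ac(1) less.prems(1) by auto
  qed (use less.prems(1) dvd_refl in blast)
qed

lemma prime_elem_dvd_prodE:
  assumes "prime_elem p" "finite S" "p dvd prod f S"
  obtains i where "i \<in> S" "p dvd f i"
  using assms(2,3)
proof (induction S rule: finite_induct)
  case empty
  then show ?case using assms(1) by (simp add: prime_elem_def)
next
  case (insert x F)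
  then show ?case using prime_elem_dvd_multD[OF assms(1)] by auto
qed

lemma monic_dvd_antisym:
  fixes p q :: "'a::field poly"
  assumes "p dvd q" "q dvd p" "lead_coeff p = 1" "lead_coeff q = 1"
  shows "p = q"
proof -
  obtain c where c: "q = p * c" using assms(1) by (rule dvdE)
  have "p \<noteq> 0" "q \<noteq> 0" using assms(3,4) by auto
  then have "degree c = 0"
    using c dvd_imp_degree_le[OF assms(2)] by (cases "c = 0") (auto simp: degree_mult_eq)
  then have "c = [:lead_coeff c:]"
    by (metis degree_0_id)
  then have "c = 1"
    using c assms(3,4) \<open>q \<noteq> 0\<close> by (metis lead_coeff_mult mult_1 one_pCons)
  then show ?thesis using c by simp
qed

lemma degree_prod_power:
  fixes p :: "nat \<Rightarrow> 'a::field poly"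
  assumes "\<And>i. i < s \<Longrightarrow> p i \<noteq> 0"
  shows "degree (\<Prod>i<s. p i ^ e i) = (\<Sum>i<s. e i * degree (p i))"
  using assms by (simp add: degree_prod_eq_sum_degree degree_power_eq)

section \<open>Codes of a cyclic vector\<close>

definition ideal_code :: "'a::field^'n^'n \<Rightarrow> 'a^'n \<Rightarrow> 'a poly \<Rightarrow> ('a^'n) set" where
  "ideal_code M v h = {poly_mat q M *v v | q. h dvd q}"

lemma ideal_code_eq_range:
  "ideal_code M v h = {poly_mat P M *v (poly_mat h M *v v) | P. True}"
  unfolding ideal_code_def
  by (auto simp: poly_mat_vec_mult[symmetric] dvd_def) (metis mult.commute)+

lemma subspace_ideal_code: "vec.subspace (ideal_code M v h)"
  unfolding vec.subspace_def ideal_code_def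
proof safe
  show "\<exists>q. 0 = poly_mat q M *v v \<and> h dvd q"
    by (intro exI[of _ 0]) simp
next
  fix q1 q2 assume "h dvd q1" "h dvd q2"
  then show "\<exists>q. poly_mat q1 M *v v + poly_mat q2 M *v v = poly_mat q M *v v \<and> h dvd q"
    by (intro exI[of _ "q1 + q2"]) (simp add: poly_mat_vec_add)
next
  fix c q assume "h dvd q"
  then show "\<exists>q'. c *s (poly_mat q M *v v) = poly_mat q' M *v v \<and> h dvd q'"
    by (intro exI[of _ "smult c q"]) (simp add: poly_mat_vec_smult dvd_smult)
qed

lemma poly_mat_vec_in_ideal_code [intro]: "h dvd q \<Longrightarrow> poly_mat q M *v v \<in> ideal_code M v h"
  by (auto simp: ideal_code_def)

lemma mat_vec_in_ideal_code: "x \<in> ideal_code M v h \<Longrightarrow> M *v x \<in> ideal_code M v h"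
proof -
  assume "x \<in> ideal_code M v h"
  then obtain q where "h dvd q" "x = poly_mat q M *v v"
    by (auto simp: ideal_code_def)
  then have "M *v x = poly_mat ([:0, 1:] * q) M *v v" and "h dvd [:0, 1:] * q"
    by (simp_all add: poly_mat_vec_mult poly_mat_vec_pCons del: mult_pCons_left)
  then show ?thesis by auto
qed

lemma ideal_code_antimono: "h dvd h' \<Longrightarrow> ideal_code M v h' \<subseteq> ideal_code M v h"
  by (auto simp: ideal_code_def intro: dvd_trans)

locale cyclic_space =
  fixes M :: "'a::field^'n^'n" and v :: "'a^'n"
  assumes cyclic_vector: "cyclic_vector M v"
begin

abbreviation krylov :: "nat \<Rightarrow> 'a^'n" where
  "krylov i \<equiv> matpow M i *v v"

lemma inj_on_krylov: "inj_on krylov {..<CARD('n)}"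
  using cyclic_vector by (simp add: cyclic_vector_def)

lemma independent_krylov: "vec.independent (krylov ` {..<CARD('n)})"
  using cyclic_vector by (simp add: cyclic_vector_def)

lemma span_krylov: "vec.span (krylov ` {..<CARD('n)}) = UNIV"
  using cyclic_vector by (simp add: cyclic_vector_def)

lemma ex_poly_mat_vec_eq: "\<exists>q. degree q < CARD('n) \<and> x = poly_mat q M *v v"
proof -
  have "x \<in> vec.span (krylov ` {..<CARD('n)})" using span_krylov by simp
  then obtain u where "x = (\<Sum>y\<in>krylov ` {..<CARD('n)}. u y *s y)"
    unfolding vec.span_finite[OF finite_imageI[OF finite_lessThan]] by blast
  also have "\<dots> = (\<Sum>i<CARD('n). u (krylov i) *s krylov i)"
    by (rule sum.reindex[OF inj_on_krylov, unfolded comp_def])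
  finally have x: "x = (\<Sum>i<CARD('n). u (krylov i) *s krylov i)" .
  define q where "q = (\<Sum>i<CARD('n). monom (u (krylov i)) i)"
  have "degree q \<le> CARD('n) - 1"
    unfolding q_def by (rule degree_sum_le) (auto intro: order.trans[OF degree_monom_le])
  then have "degree q < CARD('n)"
    using zero_less_card_finite[where 'a = 'n] by linarith
  moreover have "x = poly_mat q M *v v"
    by (simp add: q_def poly_mat_vec_sum poly_mat_vec_monom x)
  ultimately show ?thesis by blast
qed

lemma poly_mat_vec_eq_0_imp_eq_0:
  assumes "degree r < CARD('n)" and "poly_mat r M *v v = 0"
  shows "r = 0"
proof -
  define c where "c y = coeff r (inv_into {..<CARD('n)} krylov y)" for y
  have "(\<Sum>y\<in>krylov ` {..<CARD('n)}. c y *s y) = (\<Sum>i<CARD('n). coeff r i *s krylov i)"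
    by (simp add: sum.reindex[OF inj_on_krylov] c_def inv_into_f_f[OF inj_on_krylov])
  also have "\<dots> = poly_mat r M *v v"
  proof -
    obtain N where N: "CARD('n) = Suc N"
      using zero_less_card_finite[where 'a = 'n] gr0_implies_Suc by blast
    show ?thesis
      using poly_mat_vec_eq_sum[of r N M v] assms(1) by (simp add: N lessThan_Suc_atMost)
  qed
  finally have "\<forall>y\<in>krylov ` {..<CARD('n)}. c y = 0"
    using independent_krylov assms(2) unfolding vec.independent_explicit by simp
  then have "coeff r i = 0" if "i < CARD('n)" for i
    using that by (auto simp: c_def inv_into_f_f[OF inj_on_krylov])
  moreover have "coeff r i = 0" if "\<not> i < CARD('n)" for i
    using that assms(1) by (intro coeff_eq_0) simp
  ultimately show ?thesis by (metis poly_eqI coeff_0)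
qed

lemma poly_mat_eq_0_iff: "poly_mat p M = 0 \<longleftrightarrow> poly_mat p M *v v = 0"
proof
  assume "poly_mat p M *v v = 0"
  have "poly_mat p M *v x = 0" for x
  proof -
    obtain q where "x = poly_mat q M *v v" using ex_poly_mat_vec_eq by blast
    with \<open>poly_mat p M *v v = 0\<close> show ?thesis by (simp add: poly_mat_vec_commute[of p M q])
  qed
  then show "poly_mat p M = 0" by (simp add: matrix_eq)
qed simp

lemma range_poly_mat_eq_ideal_code: "range ((*v) (poly_mat h M)) = ideal_code M v h"
proof (intro set_eqI iffI)
  fix y assume "y \<in> range ((*v) (poly_mat h M))"
  then obtain x where "y = poly_mat h M *v x" by blast
  moreover obtain q where "x = poly_mat q M *v v"
    using ex_poly_mat_vec_eq by blast
  ultimately have "y = poly_mat (h * q) M *v v"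
    by (simp add: poly_mat_vec_mult)
  then show "y \<in> ideal_code M v h" by auto
next
  fix y assume "y \<in> ideal_code M v h"
  then obtain P where "y = poly_mat P M *v (poly_mat h M *v v)"
    by (auto simp: ideal_code_eq_range)
  then show "y \<in> range ((*v) (poly_mat h M))"
    by (metis rangeI poly_mat_vec_commute)
qed

lemma degree_min_poly:
  assumes "is_min_poly M f"
  shows "degree f = CARD('n)"
proof -
  have f: "f \<noteq> 0" "poly_mat f M = 0"
    using assms by (auto simp: is_min_poly_def)
  obtain q where q: "degree q < CARD('n)"
    "poly_mat (monom 1 CARD('n)) M *v v = poly_mat q M *v v"
    using ex_poly_mat_vec_eq by blast
  define p where "p = monom 1 CARD('n) - q"
  have "poly_mat p M *v v = 0"
    by (simp add: p_def poly_mat_vec_diff q(2))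
  then have "poly_mat p M = 0"
    by (simp only: poly_mat_eq_0_iff)
  moreover have "p \<noteq> 0"
  proof
    assume "p = 0"
    then have "coeff p CARD('n) = 0" by simp
    with q(1) show False by (simp add: p_def coeff_eq_0)
  qed
  moreover have "degree p \<le> CARD('n)"
    unfolding p_def using q(1) degree_monom_le[of "1::'a" "CARD('n)"]
    by (intro degree_diff_le) simp_all
  ultimately have "degree f \<le> CARD('n)"
    using assms unfolding is_min_poly_def by (meson order.trans)
  moreover have "\<not> degree f < CARD('n)"
    using poly_mat_vec_eq_0_imp_eq_0 f by auto
  ultimately show ?thesis by simp
qed

end

locale cyclic_space_annihilated = cyclic_space M v
  for M :: "'a::field^'n^'n" and v :: "'a^'n" +
  fixes f :: "'a poly"
  assumes annihilates: "poly_mat f M = 0"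
    and degree_annihilator: "degree f = CARD('n)"
begin

lemma annihilator_nonzero: "f \<noteq> 0"
  using degree_annihilator by auto

lemma poly_mat_vec_eq_0_iff: "poly_mat q M *v v = 0 \<longleftrightarrow> f dvd q"
proof
  assume q: "poly_mat q M *v v = 0"
  have "poly_mat (q mod f) M *v v = poly_mat q M *v v - poly_mat f M *v (poly_mat (q div f) M *v v)"
    by (simp add: poly_mat_vec_diff poly_mat_vec_mult flip: minus_mult_div_eq_mod)
  then have "poly_mat (q mod f) M *v v = 0"
    using q annihilates by simp
  moreover have "degree (q mod f) < CARD('n) \<or> q mod f = 0"
    using degree_mod_less'[OF annihilator_nonzero] degree_annihilator by auto
  ultimately have "q mod f = 0"
    using poly_mat_vec_eq_0_imp_eq_0 by blast
  then show "f dvd q" by (simp add: mod_eq_0_iff_dvd)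
qed (auto simp: poly_mat_vec_mult annihilates elim!: dvdE)

lemma mem_ideal_code_iff:
  assumes "h dvd f"
  shows "poly_mat q M *v v \<in> ideal_code M v h \<longleftrightarrow> h dvd q"
proof
  assume "poly_mat q M *v v \<in> ideal_code M v h"
  then obtain q' where q': "h dvd q'" "poly_mat q M *v v = poly_mat q' M *v v"
    by (auto simp: ideal_code_def)
  then have "f dvd q - q'"
    using poly_mat_vec_eq_0_iff[of "q - q'"] by (simp add: poly_mat_vec_diff)
  with assms have "h dvd q - q'" by (rule dvd_trans)
  with q'(1) show "h dvd q" by (metis diff_add_cancel dvd_add)
qed auto

lemma invariant_subspace_eq_ideal_code:
  assumes S: "vec.subspace S" and inv: "\<forall>x\<in>S. M *v x \<in> S"
  obtains h where "h dvd f" "S = ideal_code M v h"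
proof -
  define J where "J = {q. poly_mat q M *v v \<in> S}"
  have "f \<in> J"
    using annihilates vec.subspace_0[OF S] by (simp add: J_def)
  have diff: "x - y \<in> J" if "x \<in> J" "y \<in> J" for x y
    using that vec.subspace_diff[OF S] by (simp add: J_def poly_mat_vec_diff)
  have mult: "r * x \<in> J" if "x \<in> J" for r x
    using that poly_mat_vec_in_invariant_subspace[OF S inv] by (simp add: J_def poly_mat_vec_mult)
  obtain h where h: "h \<in> J" "h \<noteq> 0" "\<And>x. x \<in> J \<Longrightarrow> h dvd x"
    using poly_ideal_principal[OF \<open>f \<in> J\<close> annihilator_nonzero diff mult] by metis
  have "S = ideal_code M v h"
  proof
    show "S \<subseteq> ideal_code M v h"
    proof
      fix x assume "x \<in> S"
      obtain q where "x = poly_mat q M *v v" using ex_poly_mat_vec_eq by blast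
      with \<open>x \<in> S\<close> h(3) show "x \<in> ideal_code M v h" by (auto simp: J_def)
    qed
    show "ideal_code M v h \<subseteq> S"
    proof
      fix x assume "x \<in> ideal_code M v h"
      then obtain r where "x = poly_mat (h * r) M *v v"
        by (auto simp: ideal_code_def elim!: dvdE)
      with mult[OF h(1), of r] show "x \<in> S" by (simp add: J_def mult.commute)
    qed
  qed
  with h(3)[OF \<open>f \<in> J\<close>] show ?thesis by (rule that)
qed

lemma dim_ideal_code_le:
  assumes "h dvd f"
  shows "vec.dim (ideal_code M v h) \<le> CARD('n) - degree h"
proof -
  obtain h' where f: "f = h * h'" using assms by (rule dvdE)
  then have "h \<noteq> 0" "h' \<noteq> 0" using annihilator_nonzero by auto
  then have deg: "degree h' = CARD('n) - degree h"
    using f degree_annihilator by (simp add: degree_mult_eq)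
  let ?y = "poly_mat h M *v v"
  let ?B = "(\<lambda>i. matpow M i *v ?y) ` {..<degree h'}"
  have "ideal_code M v h \<subseteq> vec.span ?B"
  proof
    fix x assume "x \<in> ideal_code M v h"
    then obtain r where r: "x = poly_mat r M *v ?y"
      by (auto simp: ideal_code_eq_range)
    have "f dvd h * r - h * (r mod h')"
      by (simp add: f flip: right_diff_distrib minus_mod_eq_mult_div)
    then have "x = poly_mat (r mod h') M *v ?y"
      using poly_mat_vec_eq_0_iff[of "h * r - h * (r mod h')"]
      by (simp add: r poly_mat_vec_diff poly_mat_vec_mult poly_mat_vec_commute[of _ M h])
    moreover have "r mod h' = 0 \<or> degree (r mod h') < degree h'"
      using degree_mod_less'[OF \<open>h' \<noteq> 0\<close>] by auto
    ultimately show "x \<in> vec.span ?B"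
      using poly_mat_vec_in_span vec.span_zero by auto
  qed
  then have "vec.dim (ideal_code M v h) \<le> card ?B"
    by (intro vec.dim_le_card) auto
  also have "\<dots> \<le> degree h'"
    using card_image_le[of "{..<degree h'}"] by simp
  finally show ?thesis using deg by simp
qed

lemma null_space_poly_mat_eq_ideal_code:
  assumes f: "f = h * h'"
  shows "{x. poly_mat h M *v x = 0} = ideal_code M v h'"
proof (intro set_eqI)
  fix x
  obtain q where x: "x = poly_mat q M *v v"
    using ex_poly_mat_vec_eq by blast
  have "h \<noteq> 0" using f annihilator_nonzero by auto
  have "poly_mat h M *v x = 0 \<longleftrightarrow> f dvd h * q"
    by (simp add: x poly_mat_vec_eq_0_iff flip: poly_mat_vec_mult)
  also have "\<dots> \<longleftrightarrow> h' dvd q"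
    using \<open>h \<noteq> 0\<close> by (simp add: f)
  also have "\<dots> \<longleftrightarrow> x \<in> ideal_code M v h'"
    using f by (simp add: x mem_ideal_code_iff)
  finally show "x \<in> {x. poly_mat h M *v x = 0} \<longleftrightarrow> x \<in> ideal_code M v h'"
    by simp
qed

lemma dim_ideal_code:
  assumes "h dvd f"
  shows "vec.dim (ideal_code M v h) = CARD('n) - degree h"
proof -
  obtain h' where f: "f = h * h'" using assms by (rule dvdE)
  then have "h \<noteq> 0" "h' \<noteq> 0" using annihilator_nonzero by auto
  then have deg: "degree h + degree h' = CARD('n)"
    using f degree_annihilator by (simp add: degree_mult_eq)
  have "vec.dim (ideal_code M v h') + vec.dim (ideal_code M v h) = CARD('n)"
    using dim_null_space_add_dim_range[of "poly_mat h M"]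
    by (simp add: null_space_poly_mat_eq_ideal_code[OF f] range_poly_mat_eq_ideal_code)
  moreover have "vec.dim (ideal_code M v h') \<le> CARD('n) - degree h'"
    using f by (intro dim_ideal_code_le) simp
  ultimately show ?thesis
    using dim_ideal_code_le[OF assms] deg by linarith
qed

end

section \<open>Field embeddings\<close>

locale field_embedding =
  fixes emb :: "'k::field \<Rightarrow> 'l::field"
  assumes field_emb: "field_emb emb"
begin

lemma emb_add: "emb (a + b) = emb a + emb b"
  using field_emb by (simp add: field_emb_def)

lemma emb_mult: "emb (a * b) = emb a * emb b"
  using field_emb by (simp add: field_emb_def)

lemma emb_1 [simp]: "emb 1 = 1"
  using field_emb by (simp add: field_emb_def)

lemma emb_0 [simp]: "emb 0 = 0"
  using emb_add[of 0 0] add_left_imp_eq[of "emb 0" "emb 0" 0] by simp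

lemma emb_uminus: "emb (- a) = - emb a"
  using emb_add[of a "- a"] minus_unique[of "emb a" "emb (- a)"] by simp

lemma emb_diff: "emb (a - b) = emb a - emb b"
  using emb_add[of a "- b"] by (simp add: emb_uminus)

lemma emb_sum: "emb (sum f S) = (\<Sum>i\<in>S. emb (f i))"
  by (induction S rule: infinite_finite_induct) (auto simp: emb_add)

lemma emb_eq_0_iff [simp]: "emb a = 0 \<longleftrightarrow> a = 0"
proof
  assume "emb a = 0"
  show "a = 0"
  proof (rule ccontr)
    assume "a \<noteq> 0"
    then have "emb a * emb (inverse a) = 1"
      by (simp flip: emb_mult)
    with \<open>emb a = 0\<close> show False by simp
  qed
qed simp

lemma emb_eq_iff: "emb a = emb b \<longleftrightarrow> a = b"
  using emb_eq_0_iff[of "a - b"] by (simp add: emb_diff)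

lemma coeff_map_poly_emb [simp]: "coeff (map_poly emb p) i = emb (coeff p i)"
  by (simp add: coeff_map_poly)

lemma degree_map_poly_emb [simp]: "degree (map_poly emb p) = degree p"
  by (cases "p = 0") (simp_all add: map_poly_degree_eq)

lemma map_poly_emb_add: "map_poly emb (p + q) = map_poly emb p + map_poly emb q"
  by (rule poly_eqI) (simp add: emb_add)

lemma map_poly_emb_smult: "map_poly emb (smult c p) = smult (emb c) (map_poly emb p)"
  by (rule poly_eqI) (simp add: emb_mult)

lemma map_poly_emb_mult: "map_poly emb (p * q) = map_poly emb p * map_poly emb q"
  by (induction p rule: pCons_induct) (simp_all add: map_poly_emb_add map_poly_emb_smult map_poly_pCons)

lemma map_poly_emb_power: "map_poly emb (p ^ k) = map_poly emb p ^ k"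
  by (induction k) (simp_all add: map_poly_emb_mult)

lemma map_poly_emb_prod: "map_poly emb (prod f S) = (\<Prod>i\<in>S. map_poly emb (f i))"
  by (induction S rule: infinite_finite_induct) (simp_all add: map_poly_emb_mult)

lemma map_poly_emb_dvd: "p dvd q \<Longrightarrow> map_poly emb p dvd map_poly emb q"
  by (auto simp: map_poly_emb_mult elim!: dvdE)

lemma coprime_map_poly_emb:
  assumes "u * p + v * q = 1"
  shows "coprime (map_poly emb p) (map_poly emb q)"
proof -
  have "map_poly emb u * map_poly emb p + map_poly emb v * map_poly emb q = 1"
    using arg_cong[OF assms, of "map_poly emb"] by (simp add: map_poly_emb_add map_poly_emb_mult)
  then show ?thesis
    by (metis coprimeI dvd_add dvd_mult)
qed

lemma map_vec_add: "map_vec emb (x + y) = map_vec emb x + map_vec emb y"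
  by (simp add: map_vec_def vec_eq_iff emb_add)

lemma map_vec_scale: "map_vec emb (c *s x) = emb c *s map_vec emb x"
  by (simp add: map_vec_def vec_eq_iff emb_mult)

lemma map_vec_0 [simp]: "map_vec emb 0 = 0"
  by (simp add: map_vec_def vec_eq_iff)

lemma map_vec_sum: "map_vec emb (sum f S) = (\<Sum>i\<in>S. map_vec emb (f i))"
  by (induction S rule: infinite_finite_induct) (auto simp: map_vec_add)

lemma map_vec_eq_iff: "map_vec emb x = map_vec emb y \<longleftrightarrow> x = y"
  by (auto simp: map_vec_def vec_eq_iff emb_eq_iff)

lemma map_mat_vec: "map_vec emb (X *v x) = map_mat emb X *v map_vec emb x"
  by (simp add: map_vec_def map_mat_def vec_eq_iff matrix_vector_mult_def emb_sum emb_mult)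

lemma map_matpow: "map_mat emb (matpow M i) = matpow (map_mat emb M) i"
proof (induction i)
  case 0
  show ?case by (simp add: map_mat_def vec_eq_iff mat_def)
next
  case (Suc i)
  then show ?case
    by (simp add: matpow_Suc map_mat_def vec_eq_iff matrix_matrix_mult_def emb_sum emb_mult)
qed

lemma map_poly_mat_vec:
  "map_vec emb (poly_mat p M *v x) = poly_mat (map_poly emb p) (map_mat emb M) *v map_vec emb x"
  by (simp add: poly_mat_vec_eq_sum[of p "degree p"] poly_mat_vec_eq_sum[of "map_poly emb p" "degree p"]
      map_vec_sum map_vec_scale map_mat_vec map_matpow)

lemma cyclic_vector_map:
  fixes M :: "'k^'n^'n"
  assumes "cyclic_vector M v"
  shows "cyclic_vector (map_mat emb M) (map_vec emb v)"
proof -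
  interpret cyclic_space M v by (rule cyclic_space.intro) fact
  let ?A = "map_mat emb M" and ?w = "map_vec emb v"
  let ?B = "(\<lambda>i. matpow ?A i *v ?w) ` {..<CARD('n)}"
  have krylov_map: "matpow ?A i *v ?w = map_vec emb (krylov i)" for i
    by (simp add: map_mat_vec map_matpow)
  have inj: "inj_on (\<lambda>i. matpow ?A i *v ?w) {..<CARD('n)}"
    using inj_on_krylov unfolding inj_on_def krylov_map map_vec_eq_iff by blast
  have "axis j 1 \<in> vec.span ?B" for j
  proof -
    obtain q where q: "degree q < CARD('n)" "axis j 1 = poly_mat q M *v v"
      using ex_poly_mat_vec_eq by blast
    have "axis j 1 = map_vec emb (axis j 1)"
      by (simp add: map_vec_def axis_def vec_eq_iff)
    also have "\<dots> = poly_mat (map_poly emb q) ?A *v ?w"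
      by (simp add: q(2) map_poly_mat_vec)
    also have "\<dots> \<in> vec.span ?B"
      by (rule poly_mat_vec_in_span) (simp add: q(1))
    finally show ?thesis .
  qed
  then have "vec.span cart_basis \<subseteq> vec.span ?B"
    by (intro vec.span_minimal) (auto simp: cart_basis_def)
  then have span: "vec.span ?B = UNIV"
    by (simp add: top.extremum_unique)
  moreover have "card ?B = vec.dim (UNIV :: ('l^'n) set)"
    using card_image[OF inj] by (simp add: vec_dim_card card_cart_basis)
  then have "vec.independent ?B"
    using vec.card_eq_dim[of ?B UNIV] span by simp
  ultimately show ?thesis
    using inj by (simp add: cyclic_vector_def)
qed

end

section \<open>Rank supports\<close>

definition coord_vec :: "('k::field \<Rightarrow> 'l::field) \<Rightarrow> (nat \<Rightarrow> 'l) \<Rightarrow> nat \<Rightarrow> nat \<Rightarrow> 'l^'n \<Rightarrow> 'k^'n"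
  where "coord_vec emb b m t d = (\<chi> j. coords emb b m (d $ j) t)"

definition Rsupp_space :: "('k::field \<Rightarrow> 'l::field) \<Rightarrow> (nat \<Rightarrow> 'l) \<Rightarrow> nat \<Rightarrow> ('l^'n) set \<Rightarrow> ('k^'n) set"
  where "Rsupp_space emb b m D = vec.span (\<Union>d\<in>D. Rsupp emb b m d)"

lemma wtR_eq_dim_Rsupp_space: "wtR emb b m D = vec.dim (Rsupp_space emb b m D)"
  by (simp add: wtR_def Rsupp_space_def)

lemma Mr_eq_wtR:
  assumes "vec.subspace D" and "vec.dim D = r"
  shows "Mr emb b m r D = wtR emb b m D"
proof -
  have "{D'. vec.subspace D' \<and> D' \<subseteq> D \<and> vec.dim D' = r} = {D}"
  proof (intro set_eqI iffI)
    fix D' assume "D' \<in> {D'. vec.subspace D' \<and> D' \<subseteq> D \<and> vec.dim D' = r}"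
    then show "D' \<in> {D}"
      using vec.subspace_dim_equal[of D' D] assms by auto
  qed (use assms in auto)
  then show ?thesis by (simp add: Mr_def)
qed

lemma subspace_Rsupp_space: "vec.subspace (Rsupp_space emb b m D)"
  by (simp add: Rsupp_space_def)

lemma Rsupp_eq_span_coord_vec: "Rsupp emb b m d = vec.span {coord_vec emb b m t d | t. t < m}"
  by (simp add: Rsupp_def coord_vec_def)

locale field_extension_basis = field_embedding emb
  for emb :: "'k::field \<Rightarrow> 'l::field" +
  fixes b :: "nat \<Rightarrow> 'l" and m :: nat
  assumes basis: "is_K_basis emb b m"
begin

lemma coords_unique:
  assumes "\<forall>t\<ge>m. a t = 0" "x = (\<Sum>t<m. emb (a t) * b t)"
  shows "coords emb b m x = a"
  unfolding coords_def
  by (rule the1_equality) (use basis assms in \<open>auto simp: is_K_basis_def\<close>)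

lemma coords_spec:
  "(\<forall>t\<ge>m. coords emb b m x t = 0) \<and> x = (\<Sum>t<m. emb (coords emb b m x t) * b t)"
proof -
  have "\<exists>!a. (\<forall>t\<ge>m. a t = 0) \<and> x = (\<Sum>t<m. emb (a t) * b t)"
    using basis by (simp add: is_K_basis_def)
  from theI'[OF this] show ?thesis unfolding coords_def .
qed

lemma coords_repr: "x = (\<Sum>t<m. emb (coords emb b m x t) * b t)"
  using coords_spec by blast

lemma coords_linear:
  assumes "finite J"
  shows "coords emb b m (\<Sum>j\<in>J. y j * emb (c j)) t = (\<Sum>j\<in>J. coords emb b m (y j) t * c j)"
proof -
  define a where "a t = (\<Sum>j\<in>J. coords emb b m (y j) t * c j)" for t
  have "(\<Sum>j\<in>J. y j * emb (c j)) =
      (\<Sum>j\<in>J. (\<Sum>t<m. emb (coords emb b m (y j) t) * b t) * emb (c j))"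
    by (subst coords_repr[of "y _"]) (rule refl)
  also have "\<dots> = (\<Sum>t<m. emb (a t) * b t)"
    by (simp add: a_def emb_sum emb_mult sum_distrib_right sum_distrib_left mult_ac sum.swap[of _ J])
  finally have "coords emb b m (\<Sum>j\<in>J. y j * emb (c j)) = a"
    by (intro coords_unique) (simp_all add: a_def coords_spec)
  then show ?thesis by (simp add: a_def)
qed

lemma coords_0: "coords emb b m 0 t = 0"
  using coords_linear[of "{}"] by simp

lemma sum_coord_vec: "d = (\<Sum>t<m. b t *s map_vec emb (coord_vec emb b m t d))"
  using coords_repr by (simp add: vec_eq_iff sum_component map_vec_def coord_vec_def mult_ac)

lemma coord_vec_in_Rsupp_space:
  "d \<in> D \<Longrightarrow> t < m \<Longrightarrow> coord_vec emb b m t d \<in> Rsupp_space emb b m D"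
  unfolding Rsupp_space_def Rsupp_eq_span_coord_vec
  by (rule vec.span_base, rule UN_I[of d], assumption, rule vec.span_base) auto

lemma subset_span_Rsupp_space: "D \<subseteq> vec.span (map_vec emb ` Rsupp_space emb b m D)"
proof
  fix d assume "d \<in> D"
  then have "(\<Sum>t<m. b t *s map_vec emb (coord_vec emb b m t d))
      \<in> vec.span (map_vec emb ` Rsupp_space emb b m D)"
    using coord_vec_in_Rsupp_space by (intro vec.span_sum vec.span_scale vec.span_base) auto
  then show "d \<in> vec.span (map_vec emb ` Rsupp_space emb b m D)"
    by (simp flip: sum_coord_vec)
qed

lemma coord_vec_in_subspace:
  assumes V: "vec.subspace V" and y: "y \<in> vec.span (map_vec emb ` V)"
  shows "coord_vec emb b m t y \<in> V"
proof -
  obtain T r where T: "finite T" "T \<subseteq> map_vec emb ` V" and y: "y = (\<Sum>a\<in>T. r a *s a)"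
    using y unfolding vec.span_explicit by blast
  have "\<forall>a\<in>T. \<exists>u\<in>V. a = map_vec emb u"
    using T(2) by blast
  then obtain pre where pre: "\<And>a. a \<in> T \<Longrightarrow> pre a \<in> V" "\<And>a. a \<in> T \<Longrightarrow> a = map_vec emb (pre a)"
    by metis
  have "a $ j = emb (pre a $ j)" if "a \<in> T" for a j
    using arg_cong[OF pre(2)[OF that], of "\<lambda>u. u $ j"] by (simp add: map_vec_def)
  then have "y $ j = (\<Sum>a\<in>T. r a * emb (pre a $ j))" for j
    by (simp add: y sum_component cong: sum.cong)
  then have "coord_vec emb b m t y = (\<Sum>a\<in>T. coords emb b m (r a) t *s pre a)"
    by (simp add: vec_eq_iff coord_vec_def sum_component coords_linear[OF T(1)])
  also have "\<dots> \<in> V"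
    using pre by (intro vec.subspace_sum[OF V] vec.subspace_scale[OF V]) auto
  finally show ?thesis .
qed

lemma Rsupp_space_least:
  assumes V: "vec.subspace V" and D: "D \<subseteq> vec.span (map_vec emb ` V)"
  shows "Rsupp_space emb b m D \<subseteq> V"
  unfolding Rsupp_space_def Rsupp_eq_span_coord_vec
  using coord_vec_in_subspace[OF V] D
  by (intro vec.span_minimal[OF _ V] UN_least vec.span_minimal[OF _ V]) blast+

lemma coord_vec_mat_mult:
  "coord_vec emb b m t (map_mat emb M *v c) = M *v coord_vec emb b m t c"
  using coords_linear[of UNIV "\<lambda>k. c $ k" "\<lambda>k. M $ _ $ k" t]
  by (simp add: vec_eq_iff coord_vec_def matrix_vector_mult_def map_mat_def mult_ac)

lemma Rsupp_space_invariant: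
  assumes "\<And>c. c \<in> D \<Longrightarrow> map_mat emb M *v c \<in> D"
  shows "\<forall>x\<in>Rsupp_space emb b m D. M *v x \<in> Rsupp_space emb b m D"
proof -
  let ?S = "Rsupp_space emb b m D"
  have sub: "vec.subspace ((*v) M -` ?S)"
    by (rule vec.subspace_vimage[OF subspace_Rsupp_space])
  have "coord_vec emb b m t d \<in> (*v) M -` ?S" if "d \<in> D" "t < m" for d t
    using coord_vec_in_Rsupp_space[OF assms[OF that(1)] that(2)] by (simp add: coord_vec_mat_mult)
  then have "Rsupp emb b m d \<subseteq> (*v) M -` ?S" if "d \<in> D" for d
    unfolding Rsupp_eq_span_coord_vec using that by (intro vec.span_minimal[OF _ sub]) blast
  then have "vec.span (\<Union>d\<in>D. Rsupp emb b m d) \<subseteq> (*v) M -` ?S"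
    by (intro vec.span_minimal[OF _ sub] UN_least)
  then have "?S \<subseteq> (*v) M -` ?S"
    by (simp only: Rsupp_space_def)
  then show ?thesis by blast
qed

lemma coord_vec_dual_code:
  assumes "y \<in> dual_code D"
  shows "coord_vec emb b m t y \<in> dual_code {x. map_vec emb x \<in> D}"
proof -
  have "(\<Sum>j\<in>UNIV. coord_vec emb b m t y $ j * x $ j) = 0" if "map_vec emb x \<in> D" for x
  proof -
    have "(\<Sum>j\<in>UNIV. y $ j * emb (x $ j)) = 0"
      using assms that by (auto simp: dual_code_def map_vec_def)
    then show ?thesis
      using coords_linear[of UNIV "\<lambda>j. y $ j" "\<lambda>j. x $ j" t]
      by (simp add: coord_vec_def coords_0)
  qed
  then show ?thesis by (simp add: dual_code_def)
qed

lemma dual_code_Rsupp_space_dual_code: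
  assumes "vec.subspace D"
  shows "dual_code (Rsupp_space emb b m (dual_code D)) \<subseteq> {x. map_vec emb x \<in> D}"
proof
  let ?S = "Rsupp_space emb b m (dual_code D)"
  fix x assume x: "x \<in> dual_code ?S"
  have "map_vec emb ` ?S \<subseteq> dual_code {map_vec emb x}"
  proof
    fix u assume "u \<in> map_vec emb ` ?S"
    then obtain u' where "u' \<in> ?S" "u = map_vec emb u'" by blast
    with x have "emb (\<Sum>j\<in>UNIV. x $ j * u' $ j) = 0"
      by (simp add: dual_code_def)
    then show "u \<in> dual_code {map_vec emb x}"
      by (simp add: \<open>u = _\<close> dual_code_def map_vec_def emb_sum emb_mult mult.commute)
  qed
  then have "vec.span (map_vec emb ` ?S) \<subseteq> dual_code {map_vec emb x}"
    by (rule vec.span_minimal[OF _ subspace_dual_code])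
  then have "dual_code D \<subseteq> dual_code {map_vec emb x}"
    using subset_span_Rsupp_space[of "dual_code D"] by blast
  then have "map_vec emb x \<in> dual_code (dual_code D)"
    by (auto simp: dual_code_def mult.commute)
  then show "x \<in> {x. map_vec emb x \<in> D}"
    using dual_code_dual_code[OF assms] by simp
qed

lemma Rsupp_space_dual_code:
  assumes "vec.subspace D"
  shows "Rsupp_space emb b m (dual_code D) = dual_code {x. map_vec emb x \<in> D}"
    (is "?S = dual_code ?W")
proof
  have "dual_code D \<subseteq> vec.span (map_vec emb ` dual_code ?W)"
  proof
    fix y assume "y \<in> dual_code D"
    then have "(\<Sum>t<m. b t *s map_vec emb (coord_vec emb b m t y))
        \<in> vec.span (map_vec emb ` dual_code ?W)"
      using coord_vec_dual_code by (intro vec.span_sum vec.span_scale vec.span_base imageI)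
    then show "y \<in> vec.span (map_vec emb ` dual_code ?W)"
      by (simp flip: sum_coord_vec)
  qed
  then show "?S \<subseteq> dual_code ?W"
    by (rule Rsupp_space_least[OF subspace_dual_code])
next
  have "dual_code ?W \<subseteq> dual_code (dual_code ?S)"
    using dual_code_Rsupp_space_dual_code[OF assms] by (auto simp: dual_code_def)
  then show "dual_code ?W \<subseteq> ?S"
    by (simp add: dual_code_dual_code[OF subspace_Rsupp_space])
qed

end

section \<open>Descent of cyclic codes\<close>

locale cyclic_descent = field_extension_basis emb b m + cyclic_space_annihilated M v f
  for emb :: "'k::field \<Rightarrow> 'l::field" and b m and M :: "'k^'n^'n" and v f
begin

abbreviation "M\<^sub>L \<equiv> map_mat emb M"
abbreviation "v\<^sub>L \<equiv> map_vec emb v"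

sublocale L: cyclic_space_annihilated M\<^sub>L v\<^sub>L "map_poly emb f"
proof -
  interpret L: cyclic_space M\<^sub>L v\<^sub>L
    by (rule cyclic_space.intro[OF cyclic_vector_map[OF cyclic_vector]])
  show "cyclic_space_annihilated M\<^sub>L v\<^sub>L (map_poly emb f)"
    by unfold_locales
      (simp_all add: L.poly_mat_eq_0_iff degree_annihilator annihilates flip: map_poly_mat_vec)
qed

lemma map_vec_ideal_code: "map_vec emb ` ideal_code M v h \<subseteq> ideal_code M\<^sub>L v\<^sub>L (map_poly emb h)"
  by (auto simp: ideal_code_def map_poly_mat_vec intro: map_poly_emb_dvd)

lemma ideal_code_subset_span_map_vec:
  assumes "map_poly emb h dvd g"
  shows "ideal_code M\<^sub>L v\<^sub>L g \<subseteq> vec.span (map_vec emb ` ideal_code M v h)"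
proof
  fix c assume "c \<in> ideal_code M\<^sub>L v\<^sub>L g"
  then obtain q where "c = poly_mat q M\<^sub>L *v v\<^sub>L" "g dvd q"
    by (auto simp: ideal_code_def)
  with assms obtain r where "c = poly_mat (map_poly emb h * r) M\<^sub>L *v v\<^sub>L"
    by (metis dvd_trans dvdE)
  then have c: "c = poly_mat r M\<^sub>L *v map_vec emb (poly_mat h M *v v)"
    by (simp add: map_poly_mat_vec poly_mat_vec_mult poly_mat_vec_commute[of _ _ r])
  have "matpow M\<^sub>L i *v map_vec emb (poly_mat h M *v v) \<in> map_vec emb ` ideal_code M v h" for i
  proof -
    have "matpow M i *v (poly_mat h M *v v) = poly_mat (monom 1 i * h) M *v v"
      by (simp add: poly_mat_vec_mult poly_mat_vec_monom)
    then have "matpow M i *v (poly_mat h M *v v) \<in> ideal_code M v h"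
      by auto
    then show ?thesis
      by (metis imageI map_mat_vec map_matpow)
  qed
  moreover have "c \<in> vec.span ((\<lambda>i. matpow M\<^sub>L i *v map_vec emb (poly_mat h M *v v)) ` {..<Suc (degree r)})"
    unfolding c by (rule poly_mat_vec_in_span) simp
  ultimately show "c \<in> vec.span (map_vec emb ` ideal_code M v h)"
    using vec.span_mono[of "(\<lambda>i. matpow M\<^sub>L i *v map_vec emb (poly_mat h M *v v)) ` {..<Suc (degree r)}"]
    by blast
qed

lemma Rsupp_space_ideal_code:
  assumes h: "h dvd f" "map_poly emb h dvd g"
    and maximal: "\<And>h'. h dvd h' \<Longrightarrow> h' dvd f \<Longrightarrow> map_poly emb h' dvd g \<Longrightarrow> h' dvd h"
  shows "Rsupp_space emb b m (ideal_code M\<^sub>L v\<^sub>L g) = ideal_code M v h"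
proof -
  let ?C = "ideal_code M\<^sub>L v\<^sub>L g"
  let ?S = "Rsupp_space emb b m ?C"
  have "\<forall>x\<in>?S. M *v x \<in> ?S"
    by (rule Rsupp_space_invariant) (rule mat_vec_in_ideal_code)
  then obtain h' where h': "h' dvd f" "?S = ideal_code M v h'"
    by (rule invariant_subspace_eq_ideal_code[OF subspace_Rsupp_space])
  have S_sub: "?S \<subseteq> ideal_code M v h"
    by (rule Rsupp_space_least[OF subspace_ideal_code ideal_code_subset_span_map_vec[OF h(2)]])
  then have "poly_mat h' M *v v \<in> ideal_code M v h"
    using h'(2) poly_mat_vec_in_ideal_code[OF dvd_refl, of h' M v] by auto
  then have "h dvd h'"
    by (simp add: mem_ideal_code_iff[OF h(1)])
  have "vec.span (map_vec emb ` ?S) \<subseteq> ideal_code M\<^sub>L v\<^sub>L (map_poly emb h')"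
    using h'(2) map_vec_ideal_code by (intro vec.span_minimal[OF _ subspace_ideal_code]) auto
  moreover have "poly_mat g M\<^sub>L *v v\<^sub>L \<in> vec.span (map_vec emb ` ?S)"
    using subset_span_Rsupp_space[of ?C] poly_mat_vec_in_ideal_code[OF dvd_refl, of g M\<^sub>L v\<^sub>L]
    by blast
  ultimately have "map_poly emb h' dvd g"
    using L.mem_ideal_code_iff[OF map_poly_emb_dvd[OF h'(1)]] by auto
  with \<open>h dvd h'\<close> h'(1) have "h' dvd h"
    by (rule maximal)
  then show ?thesis
    using S_sub h'(2) ideal_code_antimono by blast
qed

lemma rational_vectors_ideal_code:
  assumes g: "g dvd map_poly emb f" and H: "H dvd f" "g dvd map_poly emb H"
    and minimal: "\<And>H'. H' dvd H \<Longrightarrow> g dvd map_poly emb H' \<Longrightarrow> H dvd H'"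
  shows "{x. map_vec emb x \<in> ideal_code M\<^sub>L v\<^sub>L g} = ideal_code M v H"
    (is "?W = _")
proof -
  have "vec.subspace ?W"
    using subspace_ideal_code[of M\<^sub>L v\<^sub>L g]
    by (auto simp: vec.subspace_def map_vec_add map_vec_scale)
  moreover have "\<forall>x\<in>?W. M *v x \<in> ?W"
    by (simp add: map_mat_vec mat_vec_in_ideal_code)
  ultimately obtain h where h: "h dvd f" "?W = ideal_code M v h"
    by (rule invariant_subspace_eq_ideal_code)
  have H_sub: "ideal_code M v H \<subseteq> ?W"
    using map_vec_ideal_code ideal_code_antimono[OF H(2)] by blast
  then have "poly_mat H M *v v \<in> ideal_code M v h"
    using h(2) poly_mat_vec_in_ideal_code[OF dvd_refl, of H M v] by auto
  then have "h dvd H"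
    by (simp add: mem_ideal_code_iff[OF h(1)])
  moreover have "poly_mat h M *v v \<in> ?W"
    using h(2) poly_mat_vec_in_ideal_code[OF dvd_refl, of h M v] by auto
  then have "g dvd map_poly emb h"
    by (simp add: map_poly_mat_vec L.mem_ideal_code_iff[OF g])
  ultimately have "H dvd h"
    by (rule minimal)
  then show ?thesis
    using h(2) H_sub ideal_code_antimono by blast
qed

end

section \<open>Factorization of the generator polynomial\<close>

locale generator_factorization = field_embedding emb
  for emb :: "'k::field \<Rightarrow> 'l::field_gcd" +
  fixes s :: nat and fi :: "nat \<Rightarrow> 'k poly" and mi :: "nat \<Rightarrow> nat"
    and g :: "'l poly" and gi :: "nat \<Rightarrow> 'l poly" and l lp :: "nat \<Rightarrow> nat"
  assumes fi_monic: "\<And>i. i < s \<Longrightarrow> lead_coeff (fi i) = 1"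
    and fi_irr: "\<And>i. i < s \<Longrightarrow> irreducible (fi i)"
    and fi_dist: "inj_on fi {..<s}"
    and mi_pos: "\<And>i. i < s \<Longrightarrow> mi i \<ge> 1"
    and g_fact: "g = (\<Prod>i<s. gi i)"
    and gi_monic: "\<And>i. i < s \<Longrightarrow> lead_coeff (gi i) = 1"
    and gi_dvd: "\<And>i. i < s \<Longrightarrow> gi i dvd map_poly emb (fi i) ^ mi i"
    and l_def: "\<And>i. l i = (if gi i = 1 then 0
                  else (LEAST l. l \<in> {1..mi i} \<and> gi i dvd map_poly emb (fi i) ^ l))"
    and lp_def: "\<And>i. lp i = (if gi i = map_poly emb (fi i) ^ mi i then 0
                  else (LEAST l'. l' \<in> {1..mi i} \<and> map_poly emb (fi i) ^ (mi i - l') dvd gi i))"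
begin

abbreviation F :: "nat \<Rightarrow> 'l poly" where "F i \<equiv> map_poly emb (fi i)"

lemma fi_nonzero: "i < s \<Longrightarrow> fi i \<noteq> 0"
  using fi_irr by (auto simp: irreducible_def)

lemma lead_coeff_F_power: "i < s \<Longrightarrow> lead_coeff (F i ^ k) = 1"
  by (simp add: lead_coeff_power fi_monic)

lemma coprime_F:
  assumes "i < s" "j < s" "i \<noteq> j"
  shows "coprime (F i) (F j)"
proof -
  have "\<not> fi i dvd fi j"
  proof
    assume "fi i dvd fi j"
    moreover have "\<not> is_unit (fi i)"
      using fi_irr[OF assms(1)] by (auto simp: irreducible_def)
    ultimately have "fi j dvd fi i"
      using irreducibleD'[OF fi_irr[OF assms(2)]] by blast
    with \<open>fi i dvd fi j\<close> have "fi i = fi j"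
      using monic_dvd_antisym fi_monic assms(1,2) by blast
    with fi_dist assms show False by (auto dest: inj_onD)
  qed
  then obtain u v where "u * fi i + v * fi j = 1"
    by (rule irreducible_poly_bezout[OF fi_irr[OF assms(1)]])
  then show ?thesis by (rule coprime_map_poly_emb)
qed

lemma coprime_F_power_gi:
  assumes "i < s" "j < s" "i \<noteq> j"
  shows "coprime (F i ^ a) (gi j)"
  using coprime_F[OF assms] coprime_divisors[OF dvd_refl gi_dvd[OF assms(2)]] by simp

lemma g_eq_gi_mult: "i < s \<Longrightarrow> g = gi i * (\<Prod>j\<in>{..<s} - {i}. gi j)"
  unfolding g_fact by (simp add: prod.remove)

lemma power_F_dvd_g_imp_dvd_gi:
  assumes i: "i < s" and "F i ^ a dvd g"
  shows "F i ^ a dvd gi i"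
proof -
  have "coprime (F i ^ a) (\<Prod>j\<in>{..<s} - {i}. gi j)"
    using coprime_F_power_gi i by (intro prod_coprime_right) auto
  with assms show ?thesis
    using g_eq_gi_mult[OF i] coprime_dvd_mult_left_iff by metis
qed

lemma lp_spec:
  assumes i: "i < s"
  shows "lp i \<le> mi i" and "F i ^ (mi i - lp i) dvd gi i"
    and "lp i \<ge> 1 \<Longrightarrow> \<not> F i ^ (mi i - lp i + 1) dvd gi i"
proof -
  have ex: "\<exists>l'. l' \<in> {1..mi i} \<and> F i ^ (mi i - l') dvd gi i"
    using mi_pos[OF i] by (intro exI[of _ "mi i"]) simp
  show "lp i \<le> mi i" and "F i ^ (mi i - lp i) dvd gi i"
    using LeastI_ex[OF ex] by (auto simp: lp_def[of i])
  assume lp1: "lp i \<ge> 1"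
  show "\<not> F i ^ (mi i - lp i + 1) dvd gi i"
  proof
    assume dvd: "F i ^ (mi i - lp i + 1) dvd gi i"
    have ne: "gi i \<noteq> F i ^ mi i" and lp: "lp i = (LEAST l'. l' \<in> {1..mi i} \<and> F i ^ (mi i - l') dvd gi i)"
      using lp1 lp_def[of i] by (auto split: if_splits)
    show False
    proof (cases "lp i = 1")
      case True
      then have "F i ^ mi i dvd gi i"
        using dvd \<open>lp i \<le> mi i\<close> by simp
      then show False
        using ne monic_dvd_antisym gi_dvd[OF i] gi_monic[OF i] lead_coeff_F_power[OF i] by blast
    next
      case False
      then have "lp i - 1 \<in> {1..mi i}" "mi i - (lp i - 1) = mi i - lp i + 1"
        using lp1 \<open>lp i \<le> mi i\<close> by auto
      then have "lp i \<le> lp i - 1"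
        using dvd lp by (metis (mono_tags, lifting) Least_le)
      then show False using lp1 by simp
    qed
  qed
qed

lemma l_spec:
  assumes i: "i < s"
  shows "l i \<le> mi i" and "gi i dvd F i ^ l i"
    and "l i \<ge> 1 \<Longrightarrow> \<not> gi i dvd F i ^ (l i - 1)"
proof -
  have ex: "\<exists>l'. l' \<in> {1..mi i} \<and> gi i dvd F i ^ l'"
    using mi_pos[OF i] gi_dvd[OF i] by (intro exI[of _ "mi i"]) simp
  show "l i \<le> mi i" and "gi i dvd F i ^ l i"
    using LeastI_ex[OF ex] by (auto simp: l_def[of i])
  assume l1: "l i \<ge> 1"
  show "\<not> gi i dvd F i ^ (l i - 1)"
  proof
    assume dvd: "gi i dvd F i ^ (l i - 1)"
    have ne: "gi i \<noteq> 1" and l: "l i = (LEAST l. l \<in> {1..mi i} \<and> gi i dvd F i ^ l)"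
      using l1 l_def[of i] by (auto split: if_splits)
    show False
    proof (cases "l i = 1")
      case True
      then have "is_unit (gi i)" using dvd by simp
      then show False
        using ne monic_dvd_antisym[of "gi i" 1] gi_monic[OF i] by simp
    next
      case False
      then have "l i - 1 \<in> {1..mi i}"
        using l1 \<open>l i \<le> mi i\<close> by auto
      then have "l i \<le> l i - 1"
        using dvd l by (metis (mono_tags, lifting) Least_le)
      then show False using l1 by simp
    qed
  qed
qed

lemma nonunit_dvd_prod_fi_power:
  assumes dvd: "e dvd (\<Prod>i<s. fi i ^ a i)" and "\<not> is_unit e"
  obtains i where "i < s" "a i \<ge> 1" "fi i dvd e"
proof -
  have "e \<noteq> 0"
    using dvd fi_nonzero by auto
  then obtain p where p: "irreducible p" "p dvd e"
    using irreducible_divisor_exists \<open>\<not> is_unit e\<close> by blast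
  have prime: "prime_elem p"
    by (rule irreducible_imp_prime_elem_poly[OF p(1)])
  obtain i where i: "i < s" "p dvd fi i ^ a i"
    using prime_elem_dvd_prodE[OF prime _ dvd_trans[OF p(2) dvd]] by auto
  have "a i \<noteq> 0"
  proof
    assume "a i = 0"
    with i(2) p show False by (simp add: irreducible_def)
  qed
  moreover have "p dvd fi i"
    using prime_elem_dvd_power[OF prime i(2)] .
  then have "fi i dvd p"
    using irreducibleD'[OF fi_irr[OF i(1)]] p(1) by (auto simp: irreducible_def)
  ultimately show ?thesis
    using that i(1) dvd_trans[OF _ p(2)] by simp
qed

definition largest_K_factor :: "'k poly" where
  "largest_K_factor = (\<Prod>i<s. fi i ^ (mi i - lp i))"

definition least_K_multiple :: "'k poly" where
  "least_K_multiple = (\<Prod>i<s. fi i ^ l i)"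

lemma prod_power_mi_eq: "(\<Prod>i<s. fi i ^ mi i) = largest_K_factor * (\<Prod>i<s. fi i ^ lp i)"
  unfolding largest_K_factor_def prod.distrib[symmetric]
  by (intro prod.cong refl) (simp add: lp_spec(1) flip: power_add)

lemma largest_K_factor_dvd_g: "map_poly emb largest_K_factor dvd g"
  unfolding largest_K_factor_def g_fact map_poly_emb_prod map_poly_emb_power
  by (intro prod_dvd_prod) (simp add: lp_spec(2))

lemma largest_K_factor_mult_not_dvd_g:
  assumes i: "i < s" "lp i \<ge> 1"
  shows "\<not> map_poly emb (largest_K_factor * fi i) dvd g"
proof
  assume "map_poly emb (largest_K_factor * fi i) dvd g"
  moreover have "F i ^ (mi i - lp i) dvd map_poly emb largest_K_factor"
    unfolding largest_K_factor_def map_poly_emb_prod map_poly_emb_power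
    using i(1) by (intro dvd_prodI) auto
  then have "F i ^ (mi i - lp i + 1) dvd map_poly emb (largest_K_factor * fi i)"
    by (simp add: map_poly_emb_mult mult_dvd_mono)
  ultimately have "F i ^ (mi i - lp i + 1) dvd g"
    by (rule dvd_trans[rotated])
  then show False
    using lp_spec(3)[OF i] power_F_dvd_g_imp_dvd_gi[OF i(1)] by blast
qed

lemma largest_K_factor_maximal:
  assumes "largest_K_factor dvd h" "h dvd (\<Prod>i<s. fi i ^ mi i)" and "map_poly emb h dvd g"
  shows "h dvd largest_K_factor"
proof -
  obtain e where h: "h = largest_K_factor * e"
    using assms(1) by (rule dvdE)
  have "largest_K_factor \<noteq> 0"
    using fi_nonzero by (auto simp: largest_K_factor_def)
  then have e: "e dvd (\<Prod>i<s. fi i ^ lp i)"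
    using assms(2) by (simp add: h prod_power_mi_eq)
  have "is_unit e"
  proof (rule ccontr)
    assume "\<not> is_unit e"
    then obtain i where i: "i < s" "lp i \<ge> 1" "fi i dvd e"
      by (rule nonunit_dvd_prod_fi_power[OF e])
    then have "map_poly emb (largest_K_factor * fi i) dvd map_poly emb h"
      by (intro map_poly_emb_dvd) (simp add: h mult_dvd_mono)
    with assms(3) largest_K_factor_mult_not_dvd_g[OF i(1,2)] show False
      using dvd_trans by blast
  qed
  then show ?thesis
    by (simp add: h)
qed

lemma least_K_multiple_dvd: "least_K_multiple dvd (\<Prod>i<s. fi i ^ mi i)"
  unfolding least_K_multiple_def by (intro prod_dvd_prod le_imp_power_dvd) (simp add: l_spec(1))

lemma g_dvd_least_K_multiple: "g dvd map_poly emb least_K_multiple"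
  unfolding least_K_multiple_def g_fact map_poly_emb_prod map_poly_emb_power
  by (intro prod_dvd_prod) (simp add: l_spec(2))

lemma g_not_dvd_proper_divisor_least_K_multiple:
  assumes i: "i < s" "l i \<ge> 1" and "H * fi i dvd least_K_multiple"
  shows "\<not> g dvd map_poly emb H"
proof
  assume g_H: "g dvd map_poly emb H"
  define H' where "H' = fi i ^ (l i - 1) * (\<Prod>j\<in>{..<s} - {i}. fi j ^ l j)"
  have "fi i * fi i ^ (l i - 1) = fi i ^ l i"
    using i(2) by (cases "l i") simp_all
  then have "least_K_multiple = fi i * H'"
    unfolding H'_def least_K_multiple_def using i(1)
    by (simp add: prod.remove mult.assoc[symmetric])
  then have "H dvd H'"
    using assms(3) fi_nonzero[OF i(1)] by (simp add: mult.commute)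
  then have "g dvd map_poly emb H'"
    using g_H map_poly_emb_dvd dvd_trans by blast
  moreover have "gi i dvd g"
    by (subst g_eq_gi_mult[OF i(1)]) simp
  ultimately have "gi i dvd F i ^ (l i - 1) * (\<Prod>j\<in>{..<s} - {i}. F j ^ l j)"
    unfolding H'_def map_poly_emb_mult map_poly_emb_prod map_poly_emb_power
    by (rule dvd_trans[rotated])
  moreover have "coprime (gi i) (\<Prod>j\<in>{..<s} - {i}. F j ^ l j)"
    using coprime_F_power_gi i(1) by (intro prod_coprime_right) (auto simp: coprime_commute)
  ultimately have "gi i dvd F i ^ (l i - 1)"
    using coprime_dvd_mult_left_iff by blast
  then show False
    using l_spec(3)[OF i] by blast
qed

lemma least_K_multiple_minimal:
  assumes "H dvd least_K_multiple" and "g dvd map_poly emb H"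
  shows "least_K_multiple dvd H"
proof -
  obtain e where H: "least_K_multiple = H * e"
    using assms(1) by (rule dvdE)
  have "is_unit e"
  proof (rule ccontr)
    assume "\<not> is_unit e"
    moreover have "e dvd (\<Prod>i<s. fi i ^ l i)"
      by (simp add: H flip: least_K_multiple_def)
    ultimately obtain i where i: "i < s" "l i \<ge> 1" "fi i dvd e"
      using nonunit_dvd_prod_fi_power by metis
    then have "H * fi i dvd least_K_multiple"
      by (simp add: H mult_dvd_mono)
    with assms(2) g_not_dvd_proper_divisor_least_K_multiple[OF i(1,2)] show False
      by blast
  qed
  then show ?thesis
    by (simp add: H)
qed

lemma degree_largest_K_factor:
  "degree (\<Prod>i<s. fi i ^ mi i) - degree largest_K_factor = (\<Sum>i<s. lp i * degree (fi i))"
proof -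
  have "(\<Sum>i<s. mi i * degree (fi i)) =
      (\<Sum>i<s. (mi i - lp i) * degree (fi i)) + (\<Sum>i<s. lp i * degree (fi i))"
    by (simp add: lp_spec(1) flip: sum.distrib add_mult_distrib)
  then show ?thesis
    by (simp add: largest_K_factor_def degree_prod_power fi_nonzero)
qed

lemma degree_least_K_multiple: "degree least_K_multiple = (\<Sum>i<s. l i * degree (fi i))"
  by (simp add: least_K_multiple_def degree_prod_power fi_nonzero)

lemma sum_lp_eq_sum_nontrivial:
  "(\<Sum>i<s. lp i * degree (fi i)) =
    (\<Sum>i\<in>{i. i < s \<and> gi i \<noteq> F i ^ mi i}. lp i * degree (fi i))"
  by (rule sum.mono_neutral_right) (auto simp: lp_def)

lemma sum_l_eq_sum_nontrivial:
  "(\<Sum>i<s. l i * degree (fi i)) =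
    (\<Sum>i\<in>{i. i < s \<and> gcd g (F i) \<noteq> 1}. l i * degree (fi i))"
proof (rule sum.mono_neutral_right)
  show "\<forall>i\<in>{..<s} - {i. i < s \<and> gcd g (F i) \<noteq> 1}. l i * degree (fi i) = 0"
  proof
    fix i assume "i \<in> {..<s} - {i. i < s \<and> gcd g (F i) \<noteq> 1}"
    then have i: "i < s" and "coprime g (F i)"
      by (auto simp: coprime_iff_gcd_eq_1)
    then have "coprime (gi i) (F i ^ mi i)"
      using g_eq_gi_mult[OF i] by (simp add: coprime_commute)
    then have "is_unit (gi i)"
      using gi_dvd[OF i] coprime_common_divisor dvd_refl by blast
    then have "gi i = 1"
      using monic_dvd_antisym[of "gi i" 1] gi_monic[OF i] by simp
    then show "l i * degree (fi i) = 0"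
      by (simp add: l_def)
  qed
qed auto

end

section \<open>Generalized rank weights of \<open>C\<close> and \<open>C\<^sup>\<perp>\<close>\<close>

locale cyclic_code_setting =
  cyclic_descent emb b m M v f + generator_factorization emb s fi mi g gi l lp
  for emb :: "'k::field \<Rightarrow> 'l::field_gcd" and b m and M :: "'k^'n^'n" and v f s fi mi g gi l lp +
  assumes f_eq_prod: "f = (\<Prod>i<s. fi i ^ mi i)"
    and g_dvd_f: "g dvd map_poly emb f"
begin

lemma wtR_ideal_code: "wtR emb b m (ideal_code M\<^sub>L v\<^sub>L g) = (\<Sum>i<s. lp i * degree (fi i))"
proof -
  have "largest_K_factor dvd f"
    by (simp add: f_eq_prod prod_power_mi_eq)
  moreover have "Rsupp_space emb b m (ideal_code M\<^sub>L v\<^sub>L g) = ideal_code M v largest_K_factor"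
    using Rsupp_space_ideal_code[OF _ largest_K_factor_dvd_g largest_K_factor_maximal]
      \<open>largest_K_factor dvd f\<close> by (simp add: f_eq_prod)
  ultimately show ?thesis
    using dim_ideal_code degree_largest_K_factor degree_annihilator
    by (simp add: wtR_eq_dim_Rsupp_space f_eq_prod)
qed

lemma wtR_dual_code_ideal_code:
  "wtR emb b m (dual_code (ideal_code M\<^sub>L v\<^sub>L g)) = (\<Sum>i<s. l i * degree (fi i))"
proof -
  have "least_K_multiple dvd f"
    by (simp add: f_eq_prod least_K_multiple_dvd)
  have "wtR emb b m (dual_code (ideal_code M\<^sub>L v\<^sub>L g)) =
      vec.dim (dual_code (ideal_code M v least_K_multiple))"
    using Rsupp_space_dual_code[OF subspace_ideal_code[of M\<^sub>L v\<^sub>L g]]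
      rational_vectors_ideal_code[OF g_dvd_f \<open>least_K_multiple dvd f\<close> g_dvd_least_K_multiple
        least_K_multiple_minimal]
    by (simp add: wtR_eq_dim_Rsupp_space)
  also have "\<dots> = CARD('n) - vec.dim (ideal_code M v least_K_multiple)"
    by (rule dim_dual_code[OF subspace_ideal_code])
  also have "\<dots> = degree least_K_multiple"
    using dim_ideal_code[OF \<open>least_K_multiple dvd f\<close>] annihilator_nonzero degree_annihilator
      dvd_imp_degree_le[OF \<open>least_K_multiple dvd f\<close>] by simp
  finally show ?thesis
    by (simp add: degree_least_K_multiple)
qed

end

theorem theorem4:
  fixes emb :: "'k::field \<Rightarrow> 'l::field_gcd"
    and b :: "nat \<Rightarrow> 'l" and m :: nat
    and M :: "'k^'n^'n" and v :: "'k^'n"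
    and f :: "'k poly" and s :: nat and fi :: "nat \<Rightarrow> 'k poly" and mi :: "nat \<Rightarrow> nat"
    and C :: "('l^'n) set" and k :: nat
    and g :: "'l poly" and gi :: "nat \<Rightarrow> 'l poly"
    and l lp :: "nat \<Rightarrow> nat"
  assumes emb: "field_emb emb"
    and basis: "is_K_basis emb b m" and deg: "m \<ge> CARD('n)"
    and cyc: "cyclic_matrix M"
    and minpoly: "is_min_poly M f"
    and f_fact: "f = (\<Prod>i<s. fi i ^ mi i)"
    and fi_monic: "\<And>i. i < s \<Longrightarrow> lead_coeff (fi i) = 1"
    and fi_irr: "\<And>i. i < s \<Longrightarrow> irreducible (fi i)"
    and fi_dist: "inj_on fi {..<s}"
    and mi_pos: "\<And>i. i < s \<Longrightarrow> mi i \<ge> 1"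
    and code: "M_cyclic_code emb M C"
    and v: "cyclic_vector M v"
    and g_monic: "lead_coeff g = 1" and g_dvd: "g dvd map_poly emb f"
    and Cg: "C = code_of_gen emb M v g"
    and dimC: "vec.dim C = k"
    and g_fact: "g = (\<Prod>i<s. gi i)"
    and gi_monic: "\<And>i. i < s \<Longrightarrow> lead_coeff (gi i) = 1"
    and gi_dvd: "\<And>i. i < s \<Longrightarrow> gi i dvd map_poly emb (fi i) ^ mi i"
    and l_def: "\<And>i. l i = (if gi i = 1 then 0
                  else (LEAST l. l \<in> {1..mi i} \<and> gi i dvd map_poly emb (fi i) ^ l))"
    and lp_def: "\<And>i. lp i = (if gi i = map_poly emb (fi i) ^ mi i then 0
                  else (LEAST l'. l' \<in> {1..mi i} \<and> map_poly emb (fi i) ^ (mi i - l') dvd gi i))"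
  shows "(k \<ge> 1 \<longrightarrow>
            Mr emb b m k C = (\<Sum>i<s. lp i * degree (fi i)) \<and>
            (\<Sum>i<s. lp i * degree (fi i)) =
              (\<Sum>i\<in>{i. i < s \<and> gi i \<noteq> map_poly emb (fi i) ^ mi i}. lp i * degree (fi i)))
       \<and> (k \<le> CARD('n) - 1 \<longrightarrow>
            Mr emb b m (CARD('n) - k) (dual_code C) = (\<Sum>i<s. l i * degree (fi i)) \<and>
            (\<Sum>i<s. l i * degree (fi i)) =
              (\<Sum>i\<in>{i. i < s \<and> gcd g (map_poly emb (fi i)) \<noteq> 1}. l i * degree (fi i)))"
proof -
  have "degree f = CARD('n)"
    by (rule cyclic_space.degree_min_poly[OF cyclic_space.intro[OF v] minpoly])
  then interpret cyclic_code_setting emb b m M v f s fi mi g gi l lp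
    using minpoly unfolding is_min_poly_def
    by unfold_locales (use emb basis v f_fact g_dvd fi_monic fi_irr fi_dist mi_pos g_fact gi_monic
        gi_dvd l_def lp_def in auto)
  have C: "C = ideal_code M\<^sub>L v\<^sub>L g"
    by (simp add: Cg code_of_gen_def ideal_code_eq_range)
  then have "vec.subspace C"
    by (simp add: subspace_ideal_code)
  then have "Mr emb b m k C = wtR emb b m C"
    and "Mr emb b m (CARD('n) - k) (dual_code C) = wtR emb b m (dual_code C)"
    using dimC by (simp_all add: Mr_eq_wtR subspace_dual_code dim_dual_code)
  then show ?thesis
    using wtR_ideal_code wtR_dual_code_ideal_code sum_lp_eq_sum_nontrivial sum_l_eq_sum_nontrivial
    by (simp add: C)
qed

end
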